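(* Let $G$ be a finitely generated group and $S$ a finite symmetric generating set, and let $\Sigma(G,S)$ be the Cayley graph with the path metric in which edges have length $1$. Then the number of ends of $G$ (in the sense defined below) equals the cardinality of the space of Freudenthal ends of $\Sigma(G,S)$.
   Context: For a countable group $G$, choose a proper left-invariant metric on $G$ (balls finite, $d(gh_1,gh_2)=d(h_1,h_2)$); $G$ is then a discrete proper metric space. The number of ends of $G$ is the cardinality of $CF(G)\setminus G$, where $CF$ denotes the coarse Freudenthal compactification: for a proper metric space $X$, $CF(X)$ is the compactification induced by all continuous glacially oscillating functions $X\to[0,1]$. Here a glacial scale on $X$ is a sequence $\mathcal S=\{(K_i,n_i)\}_{i\ge1}$, $K_i$ bounded, $n_i\in\mathbb N$, such that for every bounded $K$ and $r>0$ there is $i$ with $K\subset K_i$, $n_i>r$; an $\mathcal S$-chain is a finite sequence $x_1,\dots,x_n$ with, for each $i\le n-1$, some $m$ such that $x_i,x_{i+1}\notin K_m$ and $d(x_i,x_{i+1})\le n_m$; $f$ is glacially oscillating if for every $\epsilon>0$ there is a glacial scale $\mathcal S$ with $|f(x_1)-f(x_n)|<\epsilon$ for all $\mathcal S$-chains. Freudenthal ends of a locally compact, connected, locally connected space $Y$: decreasing sequences $\{U_i\}$ with $U_i$ a component of $Y\setminus K_i$ for an exhaustion by compact sets $K_i\subset\operatorname{int}K_{i+1}$. *)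

theory Defs
  imports "HOL-Analysis.Analysis" "HOL-Algebra.Generated_Groups" "HOL-Library.Equipollence"
begin

definition proper_left_invariant_metric :: "('a, 'b) monoid_scheme \<Rightarrow> ('a \<Rightarrow> 'a \<Rightarrow> real) \<Rightarrow> bool" where
  "proper_left_invariant_metric G d \<longleftrightarrow>
     Metric_space (carrier G) d \<and>
     (\<forall>x\<in>carrier G. \<forall>r. finite {y \<in> carrier G. d x y \<le> r}) \<and>
     (\<forall>g\<in>carrier G. \<forall>h1\<in>carrier G. \<forall>h2\<in>carrier G.
        d (g \<otimes>\<^bsub>G\<^esub> h1) (g \<otimes>\<^bsub>G\<^esub> h2) = d h1 h2)"

definition glacial_scale :: "'a set \<Rightarrow> ('a \<Rightarrow> 'a \<Rightarrow> real) \<Rightarrow> (nat \<Rightarrow> 'a set) \<Rightarrow> (nat \<Rightarrow> nat) \<Rightarrow> bool" where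
  "glacial_scale X d K n \<longleftrightarrow>
     (\<forall>i. K i \<subseteq> X \<and> Metric_space.mbounded X d (K i)) \<and>
     (\<forall>B r. B \<subseteq> X \<and> Metric_space.mbounded X d B \<and> r > 0 \<longrightarrow>
        (\<exists>i. B \<subseteq> K i \<and> real (n i) > r))"

definition scale_chain :: "'a set \<Rightarrow> ('a \<Rightarrow> 'a \<Rightarrow> real) \<Rightarrow> (nat \<Rightarrow> 'a set) \<Rightarrow> (nat \<Rightarrow> nat) \<Rightarrow> 'a list \<Rightarrow> bool" where
  "scale_chain X d K n xs \<longleftrightarrow>
     xs \<noteq> [] \<and> set xs \<subseteq> X \<and>
     (\<forall>i. Suc i < length xs \<longrightarrow>
        (\<exists>m. xs ! i \<notin> K m \<and> xs ! Suc i \<notin> K m \<and> d (xs ! i) (xs ! Suc i) \<le> real (n m)))"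

definition glacially_oscillating :: "'a set \<Rightarrow> ('a \<Rightarrow> 'a \<Rightarrow> real) \<Rightarrow> ('a \<Rightarrow> real) \<Rightarrow> bool" where
  "glacially_oscillating X d f \<longleftrightarrow>
     (\<forall>\<epsilon>>0. \<exists>K n. glacial_scale X d K n \<and>
        (\<forall>xs. scale_chain X d K n xs \<longrightarrow> \<bar>f (hd xs) - f (last xs)\<bar> < \<epsilon>))"

text \<open>X is a discrete space here
  (a group with a proper metric), so continuity is automatic. Functions are normalised
  to be 0 outside X, so that each function on X is represented exactly once.\<close>
definition GO_functions :: "'a set \<Rightarrow> ('a \<Rightarrow> 'a \<Rightarrow> real) \<Rightarrow> ('a \<Rightarrow> real) set" where
  "GO_functions X d = {f. (\<forall>x\<in>X. 0 \<le> f x \<and> f x \<le> 1) \<and> (\<forall>x. x \<notin> X \<longrightarrow> f x = 0)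
                          \<and> glacially_oscillating X d f}"

text \<open>The compactification induced by the family: closure of the image of X under the
  evaluation map into the product [0,1]^F (coordinates outside F are fixed to 0).\<close>
definition CF_embed :: "'a set \<Rightarrow> ('a \<Rightarrow> 'a \<Rightarrow> real) \<Rightarrow> 'a \<Rightarrow> (('a \<Rightarrow> real) \<Rightarrow> real)" where
  "CF_embed X d x = (\<lambda>f. if f \<in> GO_functions X d then f x else 0)"

definition CF_remainder :: "'a set \<Rightarrow> ('a \<Rightarrow> 'a \<Rightarrow> real) \<Rightarrow> (('a \<Rightarrow> real) \<Rightarrow> real) set" where
  "CF_remainder X d = closure (CF_embed X d ` X) - CF_embed X d ` X"

text \<open>Representatives (g, s, t): the point at parameter t \<in> [0,1] on the edge from g to g s.
  The edge (g,s) traversed at t is identified with the edge (g s, s^-1) traversed at 1 - t;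
  endpoints are vertices. Loops (s = 1) are kept as circles.\<close>
definition cayley_point :: "('a, 'b) monoid_scheme \<Rightarrow> 'a \<times> 'a \<times> real \<Rightarrow> 'a + ('a \<times> 'a \<times> real) set" where
  "cayley_point G p = (case p of (g, s, t) \<Rightarrow>
     if t = 0 then Inl g
     else if t = 1 then Inl (g \<otimes>\<^bsub>G\<^esub> s)
     else if s = \<one>\<^bsub>G\<^esub> then Inr {(g, s, t)}
     else Inr {(g, s, t), (g \<otimes>\<^bsub>G\<^esub> s, inv\<^bsub>G\<^esub> s, 1 - t)})"

definition cayley_set :: "('a, 'b) monoid_scheme \<Rightarrow> 'a set \<Rightarrow> ('a + ('a \<times> 'a \<times> real) set) set" where
  "cayley_set G S = {cayley_point G (g, s, t) | g s t. g \<in> carrier G \<and> s \<in> S \<and> t \<in> {0..1}}"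

text \<open>Quotient (CW) topology of the graph: a set is open iff its trace on every closed edge
  is open in [0,1]. For a locally finite graph this is the topology of the path metric
  with edges of length 1.\<close>
definition cayley_top :: "('a, 'b) monoid_scheme \<Rightarrow> 'a set \<Rightarrow> ('a + ('a \<times> 'a \<times> real) set) topology" where
  "cayley_top G S = topology (\<lambda>U. U \<subseteq> cayley_set G S \<and>
     (\<forall>g\<in>carrier G. \<forall>s\<in>S.
        openin (top_of_set {0..1::real}) {t \<in> {0..1}. cayley_point G (g, s, t) \<in> U}))"

definition exhaustion :: "'p topology \<Rightarrow> (nat \<Rightarrow> 'p set) \<Rightarrow> bool" where
  "exhaustion Y K \<longleftrightarrow> (\<forall>i. compactin Y (K i) \<and> K i \<subseteq> Y interior_of (K (Suc i)))
                      \<and> (\<Union>i. K i) = topspace Y"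

definition freudenthal_ends :: "'p topology \<Rightarrow> (nat \<Rightarrow> 'p set) \<Rightarrow> (nat \<Rightarrow> 'p set) set" where
  "freudenthal_ends Y K = {U. \<forall>i. U i \<in> connected_components_of (subtopology Y (topspace Y - K i))
                                 \<and> U (Suc i) \<subseteq> U i}"

end

theory Submission
  imports Defs
begin

text \<open>Both sets are in bijection with the ends of the Cayley graph computed combinatorially:
  nested sequences \<open>W n\<close> of components of the graph with the \<open>d\<close>-ball of radius \<open>n\<close> removed.

  Coarse connectedness of the Cayley graph makes the indicator of each such component glacially
  oscillating, while every glacially oscillating function is almost constant on components far
  from \<open>\<one>\<close>. Hence a point of the remainder lies in the closure of exactly one component of each
  level, and conversely a nested sequence of components determines the point of the remainder
  whose coordinates are the limits of the functions along it.

  On the topological side, \<open>d(\<one>, -)\<close> interpolated along the edges is a continuous height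
  function with compact sublevel sets, so the exhaustion and the sublevel sets are cofinal in each
  other. A connected set of large height lies over a single component of the vertex graph, and
  the subgraph spanned by such a component is connected; this matches the two kinds of ends.\<close>

lemma rtrancl_Restr_finite:
  assumes "(a, b) \<in> r\<^sup>*"
  shows "\<exists>F. finite F \<and> a \<in> F \<and> b \<in> F \<and> (a, b) \<in> (Restr r F)\<^sup>*"
  using assms
proof (induction rule: rtrancl_induct)
  case base
  show ?case by (intro exI[of _ "{a}"]) simp
next
  case (step y z)
  then obtain F where F: "finite F" "a \<in> F" "y \<in> F" "(a, y) \<in> (Restr r F)\<^sup>*" by blast
  have "(a, y) \<in> (Restr r (insert z F))\<^sup>*"
    using rtrancl_mono[of "Restr r F" "Restr r (insert z F)"] F(4) by blast
  moreover have "(y, z) \<in> Restr r (insert z F)" using step.hyps(2) F(3) by blast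
  ultimately show ?case using F by (intro exI[of _ "insert z F"]) (auto intro: rtrancl_into_rtrancl)
qed

lemma rtrancl_exit:
  assumes "(a, b) \<in> r\<^sup>*" "a \<in> A" "b \<notin> A"
  shows "\<exists>u v. (u, v) \<in> r \<and> u \<in> A \<and> v \<notin> A \<and> (v, b) \<in> (Restr r (- A))\<^sup>*"
  using assms
proof (induction rule: rtrancl_induct)
  case base
  then show ?case by simp
next
  case (step y z)
  show ?case
  proof (cases "y \<in> A")
    case True
    then show ?thesis using step by blast
  next
    case False
    then obtain u v where "(u, v) \<in> r" "u \<in> A" "v \<notin> A" "(v, y) \<in> (Restr r (- A))\<^sup>*"
      using step by blast
    moreover have "(y, z) \<in> Restr r (- A)" using False step by blast
    ultimately show ?thesis by (blast intro: rtrancl_into_rtrancl)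
  qed
qed

lemma closure_UN_finite: "finite I \<Longrightarrow> closure (\<Union>i\<in>I. A i) = (\<Union>i\<in>I. closure (A i))"
  by (induction rule: finite_induct) auto

lemma closed_Collect_fun_coordinate:
  assumes "closed Z"
  shows "closed {p :: 'a \<Rightarrow> 'b::topological_space. p x \<in> Z}"
proof -
  have "closed ((\<lambda>p :: 'a \<Rightarrow> 'b. p x) -` Z)"
    using continuous_on_closed_vimage[of UNIV "\<lambda>p :: 'a \<Rightarrow> 'b. p x"] assms by simp
  then show ?thesis by (simp add: vimage_def)
qed

lemma closure_fun_coordinate_in:
  assumes "p \<in> closure A" "\<And>a. a \<in> A \<Longrightarrow> a x \<in> Z" "closed Z"
  shows "p x \<in> (Z :: 'b::topological_space set)"
proof -
  have "closure A \<subseteq> {p. p x \<in> Z}"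
    using assms(2) by (intro closure_minimal closed_Collect_fun_coordinate[OF assms(3)]) auto
  then show ?thesis using assms(1) by auto
qed

lemma finite_imp_closed_fun:
  assumes "finite (A :: ('a \<Rightarrow> 'b::t1_space) set)"
  shows "closed A"
proof -
  have "closed {a :: 'a \<Rightarrow> 'b}" for a
  proof -
    have "{a} = (\<Inter>x. {p :: 'a \<Rightarrow> 'b. p x \<in> {a x}})" by auto
    moreover have "closed (\<Inter>x. {p :: 'a \<Rightarrow> 'b. p x \<in> {a x}})"
      by (intro closed_INT ballI closed_Collect_fun_coordinate) simp
    ultimately show ?thesis by simp
  qed
  with assms show ?thesis
  proof (induction rule: finite_induct)
    case (insert a F)
    then show ?case using closed_Un[of "{a}" F] by simp
  qed simp
qed

lemma closure_fun_real_approachable: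
  fixes p :: "'a \<Rightarrow> real"
  assumes "\<And>F e. finite F \<Longrightarrow> e > 0 \<Longrightarrow> \<exists>a\<in>A. \<forall>x\<in>F. \<bar>a x - p x\<bar> < e"
  shows "p \<in> closure A"
  unfolding closure_iff_nhds_not_empty
proof (intro allI impI)
  fix U T assume TU: "T \<subseteq> U" and "open T" and "p \<in> T"
  then have "openin (product_topology (\<lambda>i. euclidean) UNIV) T" by (simp add: open_fun_def)
  from product_topology_open_contains_basis[OF this \<open>p \<in> T\<close>]
  obtain X where X: "p \<in> (\<Pi>\<^sub>E i\<in>UNIV. X i)" "\<And>i. open (X i)" "finite {i. X i \<noteq> UNIV}"
      "(\<Pi>\<^sub>E i\<in>UNIV. X i) \<subseteq> T" by auto
  define F where "F = {i. X i \<noteq> UNIV}"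
  have "\<exists>e>0. ball (p i) e \<subseteq> X i" for i
  proof -
    have "p i \<in> X i" using X(1) by (simp add: PiE_iff)
    then show ?thesis using open_contains_ball_eq[OF X(2)] by blast
  qed
  then obtain ee where ee: "\<And>i. ee i > 0 \<and> ball (p i) (ee i) \<subseteq> X i" by metis
  define e where "e = Min (insert 1 (ee ` F))"
  have "finite F" using X(3) F_def by simp
  then have "e > 0" unfolding e_def using ee by (subst Min_gr_iff) auto
  have e_le: "e \<le> ee i" if "i \<in> F" for i
    unfolding e_def using \<open>finite F\<close> that by (intro Min_le) auto
  obtain a where a: "a \<in> A" "\<forall>i\<in>F. \<bar>a i - p i\<bar> < e"
    using assms[OF \<open>finite F\<close> \<open>e > 0\<close>] by blast
  have "a i \<in> X i" for i
  proof (cases "i \<in> F")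
    case True
    then have "\<bar>a i - p i\<bar> < ee i" using a(2) e_le[OF True] by fastforce
    then have "a i \<in> ball (p i) (ee i)" by (simp add: dist_real_def abs_minus_commute)
    then show ?thesis using ee by blast
  qed (simp add: F_def)
  then have "a \<in> (\<Pi>\<^sub>E i\<in>UNIV. X i)" by (simp add: PiE_iff)
  then show "A \<inter> U \<noteq> {}" using a(1) X(4) TU by blast
qed

lemma scale_chain_snoc:
  assumes xs: "scale_chain X d K n xs" and "z \<in> X"
    and step: "last xs \<notin> K m" "z \<notin> K m" "d (last xs) z \<le> real (n m)"
  shows "scale_chain X d K n (xs @ [z])"
  unfolding scale_chain_def
proof (intro conjI allI impI)
  have ne: "xs \<noteq> []" using xs unfolding scale_chain_def by auto
  show "xs @ [z] \<noteq> []" "set (xs @ [z]) \<subseteq> X" using xs \<open>z \<in> X\<close> unfolding scale_chain_def by auto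
  fix i assume i: "Suc i < length (xs @ [z])"
  show "\<exists>m. (xs @ [z]) ! i \<notin> K m \<and> (xs @ [z]) ! Suc i \<notin> K m \<and>
      d ((xs @ [z]) ! i) ((xs @ [z]) ! Suc i) \<le> real (n m)"
  proof (cases "Suc i < length xs")
    case True
    then have "(xs @ [z]) ! i = xs ! i" "(xs @ [z]) ! Suc i = xs ! Suc i" by (auto simp: nth_append)
    then show ?thesis using xs True unfolding scale_chain_def by presburger
  next
    case False
    then have "i = length xs - 1" "Suc i = length xs" using i ne by auto
    then have "(xs @ [z]) ! i = last xs" "(xs @ [z]) ! Suc i = z"
      using ne by (auto simp: nth_append last_conv_nth)
    then show ?thesis using step by metis
  qed
qed

lemma scale_chain_hd_last_eq:
  assumes "scale_chain X d K n xs"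
    and "\<And>x y m. x \<in> X \<Longrightarrow> y \<in> X \<Longrightarrow> x \<notin> K m \<Longrightarrow> y \<notin> K m \<Longrightarrow> d x y \<le> real (n m) \<Longrightarrow> f x = f y"
  shows "f (hd xs) = f (last xs)"
proof -
  have ne: "xs \<noteq> []" and sub: "set xs \<subseteq> X" using assms(1) unfolding scale_chain_def by auto
  have "f (xs ! j) = f (xs ! 0)" if "j < length xs" for j
    using that
  proof (induction j)
    case (Suc j)
    then obtain m where "xs ! j \<notin> K m" "xs ! Suc j \<notin> K m" "d (xs ! j) (xs ! Suc j) \<le> real (n m)"
      using assms(1) unfolding scale_chain_def by blast
    moreover have "xs ! j \<in> X" "xs ! Suc j \<in> X" using sub Suc.prems by auto
    ultimately have "f (xs ! j) = f (xs ! Suc j)" using assms(2) by blast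
    then show ?case using Suc by simp
  qed simp
  from this[of "length xs - 1"] show ?thesis using ne by (simp add: hd_conv_nth last_conv_nth)
qed

section \<open>Components outside balls of a finitely generated group\<close>

locale fg_metric_group = group G for G :: "('a, 'b) monoid_scheme" (structure) +
  fixes S :: "'a set" and d :: "'a \<Rightarrow> 'a \<Rightarrow> real"
  assumes finite_S: "finite S" and S_subset: "S \<subseteq> carrier G"
    and S_inv: "\<forall>s\<in>S. inv s \<in> S" and generate_S: "generate G S = carrier G"
    and proper_metric: "proper_left_invariant_metric G d"
begin

sublocale Metric_space "carrier G" d
  using proper_metric by (simp add: proper_left_invariant_metric_def)

lemma finite_dist_le: "x \<in> carrier G \<Longrightarrow> finite {y \<in> carrier G. d x y \<le> r}"
  using proper_metric by (simp add: proper_left_invariant_metric_def)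

lemma dist_mult_left: "\<lbrakk>g \<in> carrier G; x \<in> carrier G; y \<in> carrier G\<rbrakk> \<Longrightarrow> d (g \<otimes> x) (g \<otimes> y) = d x y"
  using proper_metric by (simp add: proper_left_invariant_metric_def)

definition len :: "'a \<Rightarrow> real" where "len x = d \<one> x"

definition gball :: "nat \<Rightarrow> 'a set" where "gball n = {g \<in> carrier G. len g \<le> real n}"

definition gen_bound :: real where "gen_bound = Max (insert 0 (len ` S))"

definition edges :: "('a \<times> 'a) set" where
  "edges = {(a, a \<otimes> s) | a s. a \<in> carrier G \<and> s \<in> S}"

definition outer_edges :: "nat \<Rightarrow> ('a \<times> 'a) set" where
  "outer_edges n = Restr edges (- gball n)"

definition outer_component :: "nat \<Rightarrow> 'a \<Rightarrow> 'a set" where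
  "outer_component n x = (outer_edges n)\<^sup>* `` {x}"

definition outer_components :: "nat \<Rightarrow> 'a set set" where
  "outer_components n = outer_component n ` (carrier G - gball n)"

text \<open>The ends of the Cayley graph, computed with respect to the exhaustion of the group by
  the balls \<open>gball n\<close> of the metric \<open>d\<close>.\<close>
definition graph_ends :: "(nat \<Rightarrow> 'a set) set" where
  "graph_ends = {W. \<forall>n. W n \<in> outer_components n \<and> W (Suc n) \<subseteq> W n}"

lemma S_carrier: "s \<in> S \<Longrightarrow> s \<in> carrier G"
  using S_subset by blast

lemma finite_gball: "finite (gball n)"
  using finite_dist_le[of \<one> "real n"] by (simp add: gball_def len_def)

lemma one_in_gball: "\<one> \<in> gball n"
  by (simp add: gball_def len_def)

lemma gball_subset: "gball n \<subseteq> carrier G"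
  by (auto simp: gball_def)

lemma gball_mono: "m \<le> n \<Longrightarrow> gball m \<subseteq> gball n"
  by (auto simp: gball_def)

lemma len_gen_le: "s \<in> S \<Longrightarrow> len s \<le> gen_bound"
  unfolding gen_bound_def using finite_S by (intro Max_ge) auto

lemma gen_bound_nonneg: "0 \<le> gen_bound"
  unfolding gen_bound_def using finite_S by (intro Max_ge) auto

lemma dist_mult_eq_len: "x \<in> carrier G \<Longrightarrow> f \<in> carrier G \<Longrightarrow> d x (x \<otimes> f) = len f"
  unfolding len_def using dist_mult_left[of x \<one> f] by simp

lemma len_triangle: "x \<in> carrier G \<Longrightarrow> v \<in> carrier G \<Longrightarrow> len x \<le> len v + d x v"
  unfolding len_def using triangle[of \<one> v x] commute[of v x] by simp

lemma len_mult_gen: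
  assumes "a \<in> carrier G" "s \<in> S"
  shows "\<bar>len (a \<otimes> s) - len a\<bar> \<le> gen_bound"
  using len_triangle[of a "a \<otimes> s"] len_triangle[of "a \<otimes> s" a] commute[of a "a \<otimes> s"]
    dist_mult_eq_len[of a s] len_gen_le[of s] assms S_carrier
  by (auto simp: abs_le_iff)

lemma edges_subset: "edges \<subseteq> carrier G \<times> carrier G"
  unfolding edges_def using S_carrier by auto

lemma sym_edges: "sym edges"
proof (rule symI)
  fix x y assume "(x, y) \<in> edges"
  then obtain s where "x \<in> carrier G" "s \<in> S" "y = x \<otimes> s" unfolding edges_def by blast
  moreover from this have "x = y \<otimes> inv s" by (simp add: m_assoc S_carrier)
  ultimately show "(y, x) \<in> edges" unfolding edges_def using S_inv S_carrier by blast
qed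

lemma sym_rtrancl_outer_edges: "sym ((outer_edges n)\<^sup>*)"
  unfolding outer_edges_def using sym_edges by (intro sym_rtrancl sym_Int) (auto intro: symI)

lemma outer_edges_subset: "outer_edges n \<subseteq> (carrier G - gball n) \<times> (carrier G - gball n)"
  unfolding outer_edges_def using edges_subset by blast

lemma rtrancl_outer_edges_outside:
  "(x, y) \<in> (outer_edges n)\<^sup>* \<Longrightarrow> x \<in> carrier G - gball n \<Longrightarrow> y \<in> carrier G - gball n"
  by (induction rule: rtrancl_induct) (use outer_edges_subset in blast)+

lemma outer_edges_antimono: "m \<le> n \<Longrightarrow> outer_edges n \<subseteq> outer_edges m"
  unfolding outer_edges_def using gball_mono by blast

lemma outer_component_subset: "x \<in> carrier G - gball n \<Longrightarrow> outer_component n x \<subseteq> carrier G - gball n"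
  unfolding outer_component_def using rtrancl_outer_edges_outside by blast

lemma outer_component_self: "x \<in> outer_component n x"
  unfolding outer_component_def by blast

lemma outer_component_eq: "y \<in> outer_component n x \<Longrightarrow> outer_component n y = outer_component n x"
  unfolding outer_component_def using sym_rtrancl_outer_edges
  by (auto intro: rtrancl_trans dest: symD)

lemma outer_components_subset: "W \<in> outer_components n \<Longrightarrow> W \<subseteq> carrier G - gball n"
  unfolding outer_components_def using outer_component_subset by auto

lemma outer_components_nonempty: "W \<in> outer_components n \<Longrightarrow> W \<noteq> {}"
  unfolding outer_components_def using outer_component_self by auto

lemma outer_components_mem_iff:
  assumes "W \<in> outer_components n" "x \<in> W"
  shows "y \<in> W \<longleftrightarrow> (x, y) \<in> (outer_edges n)\<^sup>*"
proof -
  obtain z where "W = outer_component n z" using assms(1) unfolding outer_components_def by blast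
  then have "W = outer_component n x" using outer_component_eq assms(2) by simp
  then show ?thesis unfolding outer_component_def by blast
qed

lemma outer_components_disjoint:
  assumes "W \<in> outer_components n" "W' \<in> outer_components n" "W \<inter> W' \<noteq> {}"
  shows "W = W'"
proof -
  obtain x where "x \<in> W" "x \<in> W'" using assms(3) by blast
  then show ?thesis using outer_components_mem_iff[OF assms(1)] outer_components_mem_iff[OF assms(2)]
    by blast
qed

lemma outer_components_nested:
  assumes "m \<le> n" "W \<in> outer_components n" "W' \<in> outer_components m" "W \<inter> W' \<noteq> {}"
  shows "W \<subseteq> W'"
proof
  fix y assume "y \<in> W"
  obtain x where x: "x \<in> W" "x \<in> W'" using assms(4) by blast
  have "(x, y) \<in> (outer_edges n)\<^sup>*" using outer_components_mem_iff assms(2) x(1) \<open>y \<in> W\<close> by blast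
  then have "(x, y) \<in> (outer_edges m)\<^sup>*" using rtrancl_mono[OF outer_edges_antimono[OF assms(1)]] by blast
  then show "y \<in> W'" using outer_components_mem_iff assms(3) x(2) by blast
qed

lemma outer_components_refine:
  assumes "m \<le> n" "W \<in> outer_components n"
  obtains W' where "W' \<in> outer_components m" "W \<subseteq> W'"
proof -
  obtain x where x: "x \<in> W" using outer_components_nonempty assms(2) by blast
  then have "x \<in> carrier G - gball m" using outer_components_subset[OF assms(2)] gball_mono[OF assms(1)] by blast
  then have "outer_component n x \<subseteq> outer_component m x" "outer_component m x \<in> outer_components m"
    unfolding outer_component_def outer_components_def
    using rtrancl_mono[OF outer_edges_antimono[OF assms(1)]] by auto
  moreover have "W = outer_component n x"
    using outer_components_mem_iff[OF assms(2) x] unfolding outer_component_def by blast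
  ultimately show thesis using that by blast
qed

lemma graph_ends_component: "W \<in> graph_ends \<Longrightarrow> W n \<in> outer_components n"
  unfolding graph_ends_def by blast

lemma graph_ends_antimono:
  assumes "W \<in> graph_ends" "m \<le> n"
  shows "W n \<subseteq> W m"
  using assms(2)
proof (induction rule: dec_induct)
  case (step k)
  then show ?case using assms(1) unfolding graph_ends_def by blast
qed simp

lemma edges_translate:
  assumes "c \<in> carrier G" "(a, b) \<in> edges"
  shows "(c \<otimes> a, c \<otimes> b) \<in> edges"
proof -
  obtain s where "a \<in> carrier G" "s \<in> S" "b = a \<otimes> s" using assms(2) unfolding edges_def by blast
  moreover from this have "c \<otimes> b = (c \<otimes> a) \<otimes> s" using assms(1) by (simp add: m_assoc S_carrier)
  ultimately show ?thesis unfolding edges_def using assms(1) by blast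
qed

lemma rtrancl_Restr_edges_translate:
  assumes "c \<in> carrier G" "(a, b) \<in> (Restr edges F)\<^sup>*"
  shows "(c \<otimes> a, c \<otimes> b) \<in> (Restr edges ((\<otimes>) c ` F))\<^sup>*"
  using assms(2)
proof (induction rule: rtrancl_induct)
  case (step y z)
  then have "(c \<otimes> y, c \<otimes> z) \<in> Restr edges ((\<otimes>) c ` F)" using edges_translate[OF assms(1)] by blast
  then show ?case using step.IH by (rule rtrancl_into_rtrancl[rotated])
qed simp

lemma rtrancl_edges_one: "g \<in> carrier G \<Longrightarrow> (\<one>, g) \<in> edges\<^sup>*"
proof -
  have "(\<one>, g) \<in> edges\<^sup>*" if "g \<in> generate G S" for g
    using that
  proof (induction rule: generate.induct)
    case (incl h)
    then have "(\<one>, \<one> \<otimes> h) \<in> edges" unfolding edges_def by blast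
    then show ?case using incl S_carrier by auto
  next
    case (inv h)
    then have "(\<one>, \<one> \<otimes> inv h) \<in> edges" unfolding edges_def using S_inv by blast
    then show ?case using inv S_carrier by auto
  next
    case (eng h1 h2)
    have h1: "h1 \<in> carrier G" using eng.hyps(1) generate_S by blast
    have "(h1 \<otimes> \<one>, h1 \<otimes> h2) \<in> (Restr edges ((\<otimes>) h1 ` UNIV))\<^sup>*"
      using rtrancl_Restr_edges_translate[OF h1, of \<one> h2 UNIV] eng.IH(2) by simp
    then have "(h1, h1 \<otimes> h2) \<in> edges\<^sup>*" using h1 rtrancl_mono[of "Restr edges _" edges] by auto
    with eng.IH(1) show ?case by (rule rtrancl_trans)
  qed simp
  then show "g \<in> carrier G \<Longrightarrow> (\<one>, g) \<in> edges\<^sup>*" using generate_S by blast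
qed

lemma outer_component_meets_sphere:
  assumes "x \<in> carrier G - gball n"
  obtains b s where "b \<in> gball n" "s \<in> S" "(b \<otimes> s, x) \<in> (outer_edges n)\<^sup>*"
proof -
  have "(\<one>, x) \<in> edges\<^sup>*" using rtrancl_edges_one assms by blast
  from rtrancl_exit[OF this one_in_gball] assms
  obtain u v where "(u, v) \<in> edges" "u \<in> gball n" "(v, x) \<in> (outer_edges n)\<^sup>*"
    unfolding outer_edges_def by blast
  then show thesis using that unfolding edges_def by blast
qed

lemma finite_outer_components: "finite (outer_components n)"
proof -
  have "outer_components n \<subseteq> (\<lambda>(b, s). outer_component n (b \<otimes> s)) ` (gball n \<times> S)"
  proof
    fix W assume "W \<in> outer_components n"
    then obtain x where x: "x \<in> carrier G - gball n" "W = outer_component n x"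
      unfolding outer_components_def by blast
    obtain b s where bs: "b \<in> gball n" "s \<in> S" "(b \<otimes> s, x) \<in> (outer_edges n)\<^sup>*"
      using outer_component_meets_sphere[OF x(1)] by blast
    then have "x \<in> outer_component n (b \<otimes> s)" unfolding outer_component_def by blast
    then have "W = outer_component n (b \<otimes> s)" using x(2) outer_component_eq by simp
    then show "W \<in> (\<lambda>(b, s). outer_component n (b \<otimes> s)) ` (gball n \<times> S)" using bs by force
  qed
  then show ?thesis using finite_gball finite_S finite_subset by blast
qed

lemma carrier_eq_gball_Un_outer_components: "carrier G = gball n \<union> \<Union>(outer_components n)"
proof -
  have "carrier G - gball n \<subseteq> \<Union>(outer_components n)"
    unfolding outer_components_def using outer_component_self by blast
  then show ?thesis using outer_components_subset gball_subset by blast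
qed

lemma translated_path_outer:
  assumes x: "x \<in> carrier G" and "F \<subseteq> carrier G" "(\<one>, h) \<in> (Restr edges F)\<^sup>*"
    and "\<And>f. f \<in> F \<Longrightarrow> len f \<le> L" "len x > real n + L"
  shows "(x, x \<otimes> h) \<in> (outer_edges n)\<^sup>*"
proof -
  have "x \<otimes> f \<notin> gball n" if "f \<in> F" for f
  proof -
    have "f \<in> carrier G" using that assms(2) by blast
    then have "len x \<le> len (x \<otimes> f) + len f"
      using len_triangle[OF x, of "x \<otimes> f"] dist_mult_eq_len[OF x] x by simp
    then show ?thesis using assms(4)[OF that] assms(5) unfolding gball_def by simp
  qed
  then have "Restr edges ((\<otimes>) x ` F) \<subseteq> outer_edges n" unfolding outer_edges_def by blast
  moreover have "(x \<otimes> \<one>, x \<otimes> h) \<in> (Restr edges ((\<otimes>) x ` F))\<^sup>*"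
    using rtrancl_Restr_edges_translate[OF x assms(3)] .
  then have "(x, x \<otimes> h) \<in> (Restr edges ((\<otimes>) x ` F))\<^sup>*" using x by simp
  ultimately show ?thesis using rtrancl_mono by blast
qed

text \<open>Paths from \<open>x\<close> to points at distance \<open>\<le> r\<close> can be taken among the left translates by
  \<open>x\<close> of finitely many paths starting at \<open>\<one>\<close>, so they stay at bounded distance from \<open>x\<close>.\<close>
lemma coarse_connectivity:
  "\<exists>L. \<forall>x\<in>carrier G. \<forall>y\<in>carrier G. \<forall>n. d x y \<le> r \<longrightarrow> len x > real n + L \<longrightarrow> (x, y) \<in> (outer_edges n)\<^sup>*"
proof -
  define H where "H = {h \<in> carrier G. len h \<le> r}"
  have "finite H" unfolding H_def len_def using finite_dist_le by simp
  have "\<exists>F. finite F \<and> F \<subseteq> carrier G \<and> (\<one>, h) \<in> (Restr edges F)\<^sup>*" if "h \<in> H" for h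
  proof -
    have "h \<in> carrier G" using that unfolding H_def by blast
    then obtain F where "finite F" "(\<one>, h) \<in> (Restr edges F)\<^sup>*"
      using rtrancl_Restr_finite[OF rtrancl_edges_one] by blast
    moreover have "Restr edges (F \<inter> carrier G) = Restr edges F" using edges_subset by blast
    ultimately have "finite (F \<inter> carrier G) \<and> F \<inter> carrier G \<subseteq> carrier G \<and>
        (\<one>, h) \<in> (Restr edges (F \<inter> carrier G))\<^sup>*" by simp
    then show ?thesis by blast
  qed
  then obtain FF where FF: "\<And>h. h \<in> H \<Longrightarrow> finite (FF h) \<and> FF h \<subseteq> carrier G \<and> (\<one>, h) \<in> (Restr edges (FF h))\<^sup>*"
    by metis
  define L where "L = Max (insert 0 (len ` (\<Union>h\<in>H. FF h)))"
  have "finite (\<Union>h\<in>H. FF h)" using \<open>finite H\<close> FF by blast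
  then have L: "len f \<le> L" if "h \<in> H" "f \<in> FF h" for h f
    unfolding L_def using that by (intro Max_ge) auto
  have "(x, y) \<in> (outer_edges n)\<^sup>*"
    if x: "x \<in> carrier G" and y: "y \<in> carrier G" and "d x y \<le> r" and "len x > real n + L" for x y n
  proof -
    define h where "h = inv x \<otimes> y"
    have h: "h \<in> carrier G" "x \<otimes> h = y" using x y by (auto simp: h_def m_assoc[symmetric])
    then have "h \<in> H" using dist_mult_eq_len[OF x, of h] \<open>d x y \<le> r\<close> by (simp add: H_def)
    then have "FF h \<subseteq> carrier G" "(\<one>, h) \<in> (Restr edges (FF h))\<^sup>*" using FF by simp_all
    from translated_path_outer[OF x this L[OF \<open>h \<in> H\<close>] \<open>len x > real n + L\<close>]
    show ?thesis using h(2) by simp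
  qed
  then show ?thesis by blast
qed

end

section \<open>The remainder of the coarse Freudenthal compactification\<close>

context fg_metric_group
begin

abbreviation GO :: "('a \<Rightarrow> real) set" where "GO \<equiv> GO_functions (carrier G) d"
abbreviation embed :: "'a \<Rightarrow> ('a \<Rightarrow> real) \<Rightarrow> real" where "embed \<equiv> CF_embed (carrier G) d"
abbreviation remainder :: "(('a \<Rightarrow> real) \<Rightarrow> real) set" where
  "remainder \<equiv> CF_remainder (carrier G) d"

lemma mbounded_gball: "mbounded (gball n)"
  unfolding mbounded_def mcball_def gball_def len_def by blast

lemma mbounded_subset_gball:
  assumes "mbounded A"
  obtains N where "\<And>n. n \<ge> N \<Longrightarrow> A \<subseteq> gball n"
proof -
  obtain x0 R where "A \<subseteq> mcball x0 R" using assms unfolding mbounded_def by blast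
  then have A: "A \<subseteq> {y. x0 \<in> carrier G \<and> y \<in> carrier G \<and> d x0 y \<le> R}" by (simp add: mcball_def)
  have "A \<subseteq> gball n" if "nat \<lceil>len x0 + R\<rceil> \<le> n" for n
  proof
    fix y assume "y \<in> A"
    then have "x0 \<in> carrier G" "y \<in> carrier G" "d x0 y \<le> R" using A by auto
    then have "len y \<le> len x0 + R" using len_triangle[of y x0] commute[of y x0] by simp
    also have "\<dots> \<le> real n" using that by linarith
    finally show "y \<in> gball n" unfolding gball_def using \<open>y \<in> carrier G\<close> by simp
  qed
  then show thesis using that by blast
qed

lemma glacial_scale_gball:
  assumes "\<And>m. m \<le> M m"
  shows "glacial_scale (carrier G) d (\<lambda>m. gball (M m)) (\<lambda>m. m)"
  unfolding glacial_scale_def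
proof (intro conjI allI impI)
  fix A and r :: real assume A: "A \<subseteq> carrier G \<and> mbounded A \<and> r > 0"
  then obtain N where N: "\<And>n. n \<ge> N \<Longrightarrow> A \<subseteq> gball n" using mbounded_subset_gball by blast
  define i where "i = N + nat \<lceil>r\<rceil> + 1"
  have "A \<subseteq> gball (M i)" using N[of "M i"] assms[of i] unfolding i_def by simp
  moreover have "real i > r" unfolding i_def by linarith
  ultimately show "\<exists>i. A \<subseteq> gball (M i) \<and> real i > r" by blast
qed (use gball_subset mbounded_gball in auto)

lemma outer_path_scale_chain:
  assumes "K i \<subseteq> gball n" "gen_bound \<le> real (k i)"
    and "(x, y) \<in> (outer_edges n)\<^sup>*" "x \<in> carrier G"
  shows "\<exists>xs. scale_chain (carrier G) d K k xs \<and> hd xs = x \<and> last xs = y"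
  using assms(3)
proof (induction rule: rtrancl_induct)
  case base
  have "scale_chain (carrier G) d K k [x]" using assms(4) by (simp add: scale_chain_def)
  then show ?case by fastforce
next
  case (step u v)
  then obtain xs where xs: "scale_chain (carrier G) d K k xs" "hd xs = x" "last xs = u" by blast
  obtain s where s: "u \<in> carrier G" "s \<in> S" "v = u \<otimes> s" "u \<notin> gball n" "v \<notin> gball n"
    using step.hyps(2) unfolding outer_edges_def edges_def by blast
  have "d u v \<le> real (k i)" using dist_mult_eq_len[of u s] len_gen_le[of s] s assms(2) S_carrier by simp
  moreover have "u \<notin> K i" "v \<notin> K i" "v \<in> carrier G" using s assms(1) S_carrier by auto
  ultimately have "scale_chain (carrier G) d K k (xs @ [v])"
    using scale_chain_snoc[OF xs(1)] xs(3) by blast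
  moreover have "hd (xs @ [v]) = x" using xs unfolding scale_chain_def by simp
  ultimately show ?case by (intro exI[of _ "xs @ [v]"]) simp
qed

lemma glacially_oscillating_nearly_constant:
  assumes "glacially_oscillating (carrier G) d f" "e > 0"
  obtains N where "\<And>n W x y. \<lbrakk>n \<ge> N; W \<in> outer_components n; x \<in> W; y \<in> W\<rbrakk> \<Longrightarrow> \<bar>f x - f y\<bar> < e"
proof -
  obtain K k where scale: "glacial_scale (carrier G) d K k"
    and chain: "\<And>xs. scale_chain (carrier G) d K k xs \<Longrightarrow> \<bar>f (hd xs) - f (last xs)\<bar> < e"
    using assms unfolding glacially_oscillating_def by blast
  have "{\<one>} \<subseteq> carrier G \<and> mbounded {\<one>} \<and> gen_bound + 1 > 0"
    using gen_bound_nonneg by (simp add: mbounded_insert)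
  then obtain i where "real (k i) > gen_bound + 1"
    using scale unfolding glacial_scale_def by blast
  moreover have "mbounded (K i)" using scale unfolding glacial_scale_def by blast
  ultimately obtain N where N: "\<And>n. n \<ge> N \<Longrightarrow> K i \<subseteq> gball n" using mbounded_subset_gball by blast
  have "\<bar>f x - f y\<bar> < e"
    if n: "n \<ge> N" and W: "W \<in> outer_components n" and "x \<in> W" "y \<in> W" for n W x y
  proof -
    have "(x, y) \<in> (outer_edges n)\<^sup>*" "x \<in> carrier G"
      using outer_components_mem_iff[OF W \<open>x \<in> W\<close>] \<open>y \<in> W\<close> outer_components_subset[OF W] \<open>x \<in> W\<close>
      by auto
    moreover have "gen_bound \<le> real (k i)" using \<open>real (k i) > gen_bound + 1\<close> by simp
    ultimately obtain xs where "scale_chain (carrier G) d K k xs" "hd xs = x" "last xs = y"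
      using outer_path_scale_chain[where K = K and i = i, OF N[OF n]] by blast
    then show ?thesis using chain by blast
  qed
  then show thesis using that by blast
qed

lemma indicator_outer_component_GO:
  assumes W: "W \<in> outer_components n"
  shows "(indicator W :: 'a \<Rightarrow> real) \<in> GO"
proof -
  have "\<forall>m::nat. \<exists>L. \<forall>x\<in>carrier G. \<forall>y\<in>carrier G. \<forall>n.
      d x y \<le> real m \<longrightarrow> len x > real n + L \<longrightarrow> (x, y) \<in> (outer_edges n)\<^sup>*"
    using coarse_connectivity by blast
  then obtain L where L: "\<And>m x y n. \<lbrakk>x \<in> carrier G; y \<in> carrier G; d x y \<le> real m; len x > real n + L m\<rbrakk>
      \<Longrightarrow> (x, y) \<in> (outer_edges n)\<^sup>*"
    by metis
  \<comment> \<open>two points outside \<open>gball (M m)\<close> at distance \<open>\<le> m\<close> are joined outside \<open>gball n\<close>\<close>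
  define M where "M m = n + m + nat \<lceil>L m\<rceil>" for m
  have scale: "glacial_scale (carrier G) d (\<lambda>m. gball (M m)) (\<lambda>m. m)"
    by (rule glacial_scale_gball) (simp add: M_def)
  have "indicator W x = (indicator W y :: real)"
    if "x \<in> carrier G" "y \<in> carrier G" "x \<notin> gball (M m)" "y \<notin> gball (M m)" "d x y \<le> real m" for x y m
  proof -
    have "len x > real (M m)" using that(1,3) unfolding gball_def by auto
    moreover have "real (M m) \<ge> real n + L m" unfolding M_def by linarith
    ultimately have "len x > real n + L m" by linarith
    then have "(x, y) \<in> (outer_edges n)\<^sup>*" using L that by blast
    then have "x \<in> W \<longleftrightarrow> y \<in> W"
      using outer_components_mem_iff[OF W] sym_rtrancl_outer_edges by (metis symD)
    then show ?thesis by (simp add: indicator_def)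
  qed
  then have "indicator W (hd xs) = (indicator W (last xs) :: real)"
    if "scale_chain (carrier G) d (\<lambda>m. gball (M m)) (\<lambda>m. m) xs" for xs
    using scale_chain_hd_last_eq[OF that] by blast
  then have "glacially_oscillating (carrier G) d (indicator W)"
    unfolding glacially_oscillating_def using scale by fastforce
  then show ?thesis
    unfolding GO_functions_def using outer_components_subset[OF W] by (auto simp: indicator_def)
qed

lemma closure_embed_not_GO:
  assumes "p \<in> closure (embed ` A)" "f \<notin> GO"
  shows "p f = 0"
proof -
  have "p f \<in> {0}"
    by (rule closure_fun_coordinate_in[OF assms(1)]) (use assms(2) in \<open>auto simp: CF_embed_def\<close>)
  then show ?thesis by simp
qed

lemma closure_embed_indicator:
  assumes p: "p \<in> closure (embed ` W')" and W: "W \<in> outer_components n" and W': "W' \<in> outer_components n"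
  shows "p (indicator W) = (if W = W' then 1 else 0)"
proof -
  have "p (indicator W) \<in> {if W = W' then 1 else 0}"
  proof (rule closure_fun_coordinate_in[OF p])
    fix a assume "a \<in> embed ` W'"
    then obtain x where x: "x \<in> W'" "a = embed x" by blast
    have "W = W' \<or> W \<inter> W' = {}" using outer_components_disjoint[OF W W'] by blast
    then show "a (indicator W) \<in> {if W = W' then 1 else 0}"
      using x indicator_outer_component_GO[OF W] by (auto simp: CF_embed_def indicator_def)
  qed simp
  then show ?thesis by simp
qed

lemma closure_embed_near:
  assumes "p \<in> closure (embed ` W)" "f \<in> GO" "\<And>x. x \<in> W \<Longrightarrow> \<bar>f x - c\<bar> \<le> e"
  shows "\<bar>p f - c\<bar> \<le> e"
proof -
  have "p f \<in> cball c e"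
  proof (rule closure_fun_coordinate_in[OF assms(1)])
    fix a assume "a \<in> embed ` W"
    then obtain x where "x \<in> W" "a = embed x" by blast
    then show "a f \<in> cball c e"
      using assms(2) assms(3)[of x] by (simp add: CF_embed_def dist_real_def abs_minus_commute)
  qed simp
  then show ?thesis by (simp add: dist_real_def abs_minus_commute)
qed

lemma remainder_in_closure_component:
  assumes "p \<in> remainder"
  shows "\<exists>!W. W \<in> outer_components n \<and> p \<in> closure (embed ` W)"
proof -
  have "embed ` carrier G = embed ` gball n \<union> (\<Union>W\<in>outer_components n. embed ` W)"
    using carrier_eq_gball_Un_outer_components[of n] by blast
  moreover have "closure (embed ` gball n) = embed ` gball n"
    using finite_imp_closed_fun[of "embed ` gball n"] finite_gball by (simp add: closure_closed)
  moreover have "closure (\<Union>W\<in>outer_components n. embed ` W) = (\<Union>W\<in>outer_components n. closure (embed ` W))"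
    by (rule closure_UN_finite[OF finite_outer_components])
  ultimately have "closure (embed ` carrier G) =
      embed ` gball n \<union> (\<Union>W\<in>outer_components n. closure (embed ` W))"
    by (metis closure_Un)
  moreover have "embed ` gball n \<subseteq> embed ` carrier G" using gball_subset by blast
  ultimately obtain W where W: "W \<in> outer_components n" "p \<in> closure (embed ` W)"
    using assms unfolding CF_remainder_def by blast
  moreover have "W' = W" if "W' \<in> outer_components n" "p \<in> closure (embed ` W')" for W'
    using closure_embed_indicator[OF that(2) W(1) that(1)] closure_embed_indicator[OF W(2,1,1)]
    by (metis zero_neq_one)
  ultimately show ?thesis by blast
qed

definition point_end :: "(('a \<Rightarrow> real) \<Rightarrow> real) \<Rightarrow> nat \<Rightarrow> 'a set" where
  "point_end p n = (THE W. W \<in> outer_components n \<and> p \<in> closure (embed ` W))"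

lemma point_end:
  assumes "p \<in> remainder"
  shows "point_end p n \<in> outer_components n" "p \<in> closure (embed ` point_end p n)"
  using theI'[OF remainder_in_closure_component[OF assms]] unfolding point_end_def by blast+

lemma point_end_eq:
  "p \<in> remainder \<Longrightarrow> W \<in> outer_components n \<Longrightarrow> p \<in> closure (embed ` W) \<Longrightarrow> point_end p n = W"
  using remainder_in_closure_component point_end by blast

lemma point_end_graph_ends: "p \<in> remainder \<Longrightarrow> point_end p \<in> graph_ends"
  unfolding graph_ends_def
proof (intro CollectI allI conjI)
  fix n assume p: "p \<in> remainder"
  then show "point_end p n \<in> outer_components n" by (rule point_end)
  obtain W where W: "W \<in> outer_components n" "point_end p (Suc n) \<subseteq> W"
    using outer_components_refine[of n "Suc n"] point_end(1)[OF p] by auto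
  then have "p \<in> closure (embed ` W)"
    using point_end(2)[OF p, of "Suc n"] closure_mono[OF image_mono[OF W(2)]] by blast
  then show "point_end p (Suc n) \<subseteq> point_end p n" using point_end_eq[OF p W(1)] W(2) by simp
qed

lemma inj_on_point_end: "inj_on point_end remainder"
proof (rule inj_onI)
  fix p q assume p: "p \<in> remainder" and q: "q \<in> remainder" and eq: "point_end p = point_end q"
  show "p = q"
  proof
    fix f
    show "p f = q f"
    proof (cases "f \<in> GO")
      case False
      moreover have "p \<in> closure (embed ` carrier G)" "q \<in> closure (embed ` carrier G)"
        using p q unfolding CF_remainder_def by auto
      ultimately show ?thesis using closure_embed_not_GO by metis
    next
      case True
      show ?thesis
      proof (rule ccontr)
        assume "p f \<noteq> q f"
        define e where "e = \<bar>p f - q f\<bar> / 3"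
        have "e > 0" using \<open>p f \<noteq> q f\<close> by (simp add: e_def)
        obtain N where N: "\<And>n W x y. \<lbrakk>n \<ge> N; W \<in> outer_components n; x \<in> W; y \<in> W\<rbrakk> \<Longrightarrow> \<bar>f x - f y\<bar> < e"
          using glacially_oscillating_nearly_constant \<open>e > 0\<close> True unfolding GO_functions_def by blast
        define W where "W = point_end p N"
        have W: "W \<in> outer_components N" using point_end(1)[OF p] by (simp add: W_def)
        then obtain x0 where "x0 \<in> W" using outer_components_nonempty by blast
        then have near: "\<bar>f x - f x0\<bar> \<le> e" if "x \<in> W" for x
          using N[OF order_refl W that \<open>x0 \<in> W\<close>] by simp
        have "\<bar>p f - f x0\<bar> \<le> e" "\<bar>q f - f x0\<bar> \<le> e"
          using closure_embed_near[OF _ True near] point_end(2)[OF p] point_end(2)[OF q] eq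
          by (auto simp: W_def)
        then show False using \<open>e > 0\<close> unfolding e_def by (auto simp: abs_le_iff abs_if split: if_splits)
      qed
    qed
  qed
qed

definition end_vertex :: "(nat \<Rightarrow> 'a set) \<Rightarrow> nat \<Rightarrow> 'a" where
  "end_vertex W n = (SOME x. x \<in> W n)"

lemma end_vertex:
  assumes "W \<in> graph_ends" "m \<le> n"
  shows "end_vertex W n \<in> W m"
proof -
  have "end_vertex W n \<in> W n"
    using outer_components_nonempty[OF graph_ends_component[OF assms(1)]]
    unfolding end_vertex_def by (simp add: some_in_eq)
  then show ?thesis using graph_ends_antimono[OF assms] by blast
qed

definition end_value :: "(nat \<Rightarrow> 'a set) \<Rightarrow> ('a \<Rightarrow> real) \<Rightarrow> real" where
  "end_value W f = lim (\<lambda>n. f (end_vertex W n))"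

lemma end_value_approx:
  assumes W: "W \<in> graph_ends" and "f \<in> GO" "e > 0"
  obtains N where "\<And>n x. n \<ge> N \<Longrightarrow> x \<in> W n \<Longrightarrow> \<bar>f x - end_value W f\<bar> \<le> e"
proof -
  obtain N where N: "\<And>n V x y. \<lbrakk>n \<ge> N; V \<in> outer_components n; x \<in> V; y \<in> V\<rbrakk> \<Longrightarrow> \<bar>f x - f y\<bar> < e"
    using glacially_oscillating_nearly_constant assms(2,3) unfolding GO_functions_def by blast
  have close: "\<bar>f x - f (end_vertex W m)\<bar> < e" if "x \<in> W N" "m \<ge> N" for x m
    using N[OF order_refl graph_ends_component[OF W] that(1) end_vertex[OF W that(2)]] .
  have "Cauchy (\<lambda>n. f (end_vertex W n))"
  proof (rule metric_CauchyI)
    fix \<epsilon> :: real assume "\<epsilon> > 0"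
    obtain M where M: "\<And>n V x y. \<lbrakk>n \<ge> M; V \<in> outer_components n; x \<in> V; y \<in> V\<rbrakk> \<Longrightarrow> \<bar>f x - f y\<bar> < \<epsilon>"
      using glacially_oscillating_nearly_constant \<open>\<epsilon> > 0\<close> assms(2) unfolding GO_functions_def by blast
    have "dist (f (end_vertex W m)) (f (end_vertex W n)) < \<epsilon>" if "m \<ge> M" "n \<ge> M" for m n
      using M[OF order_refl graph_ends_component[OF W] end_vertex[OF W that(1)] end_vertex[OF W that(2)]]
      by (simp add: dist_real_def)
    then show "\<exists>M. \<forall>m\<ge>M. \<forall>n\<ge>M. dist (f (end_vertex W m)) (f (end_vertex W n)) < \<epsilon>" by blast
  qed
  then have lim: "(\<lambda>n. f (end_vertex W n)) \<longlonglongrightarrow> end_value W f"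
    unfolding end_value_def using Cauchy_convergent_iff convergent_LIMSEQ_iff by blast
  have "\<bar>f x - end_value W f\<bar> \<le> e" if "n \<ge> N" "x \<in> W n" for n x
  proof -
    have "x \<in> W N" using graph_ends_antimono[OF W that(1)] that(2) by blast
    have "(\<lambda>m. \<bar>f x - f (end_vertex W m)\<bar>) \<longlonglongrightarrow> \<bar>f x - end_value W f\<bar>"
      using lim by (intro tendsto_intros)
    moreover have "\<forall>m\<ge>N. \<bar>f x - f (end_vertex W m)\<bar> \<le> e" using close[OF \<open>x \<in> W N\<close>] by fastforce
    ultimately show ?thesis using LIMSEQ_le_const2 by blast
  qed
  then show thesis using that by blast
qed

lemma end_value_indicator:
  assumes W: "W \<in> graph_ends" and V: "V \<in> outer_components n"
  shows "end_value W (indicator V) = (if V = W n then 1 else 0)"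
proof -
  have "V = W n \<or> V \<inter> W n = {}" using outer_components_disjoint[OF V graph_ends_component[OF W]] by blast
  then have "\<forall>m\<ge>n. indicator V (end_vertex W m) = (if V = W n then 1 else 0 :: real)"
    using end_vertex[OF W] by (auto simp: indicator_def)
  then have "eventually (\<lambda>m. indicator V (end_vertex W m) = (if V = W n then 1 else 0 :: real)) sequentially"
    unfolding eventually_sequentially by blast
  then have "(\<lambda>m. indicator V (end_vertex W m) :: real) \<longlonglongrightarrow> (if V = W n then 1 else 0)"
    by (rule tendsto_eventually)
  then show ?thesis unfolding end_value_def by (rule limI)
qed

definition end_point :: "(nat \<Rightarrow> 'a set) \<Rightarrow> ('a \<Rightarrow> real) \<Rightarrow> real" where
  "end_point W f = (if f \<in> GO then end_value W f else 0)"

lemma end_point_in_closure: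
  assumes W: "W \<in> graph_ends"
  shows "end_point W \<in> closure (embed ` carrier G)"
proof (rule closure_fun_real_approachable)
  fix F :: "('a \<Rightarrow> real) set" and e :: real assume "finite F" "e > 0"
  have "\<forall>f\<in>F \<inter> GO. eventually (\<lambda>n. \<forall>x\<in>W n. \<bar>f x - end_value W f\<bar> \<le> e / 2) sequentially"
    using end_value_approx[OF W, of _ "e / 2"] \<open>e > 0\<close> unfolding eventually_sequentially
    by (metis IntD2 half_gt_zero)
  then have "eventually (\<lambda>n. \<forall>f\<in>F \<inter> GO. \<forall>x\<in>W n. \<bar>f x - end_value W f\<bar> \<le> e / 2) sequentially"
    using \<open>finite F\<close> by (simp add: eventually_ball_finite)
  then obtain n where n: "\<forall>f\<in>F \<inter> GO. \<forall>x\<in>W n. \<bar>f x - end_value W f\<bar> \<le> e / 2"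
    unfolding eventually_sequentially by blast
  define x where "x = end_vertex W n"
  have "x \<in> W n" "x \<in> carrier G"
    using end_vertex[OF W order_refl] outer_components_subset[OF graph_ends_component[OF W]]
    unfolding x_def by auto
  moreover have "\<bar>embed x f - end_point W f\<bar> < e" if "f \<in> F" for f
  proof (cases "f \<in> GO")
    case True
    then have "\<bar>f x - end_value W f\<bar> \<le> e / 2" using n that \<open>x \<in> W n\<close> by blast
    then show ?thesis using True \<open>e > 0\<close> by (simp add: CF_embed_def end_point_def)
  qed (simp add: CF_embed_def end_point_def \<open>e > 0\<close>)
  ultimately show "\<exists>a\<in>embed ` carrier G. \<forall>f\<in>F. \<bar>a f - end_point W f\<bar> < e" by blast
qed

lemma end_point_indicator:
  "W \<in> graph_ends \<Longrightarrow> V \<in> outer_components n \<Longrightarrow> end_point W (indicator V) = (if V = W n then 1 else 0)"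
  using end_value_indicator indicator_outer_component_GO by (simp add: end_point_def)

lemma end_point_remainder:
  assumes W: "W \<in> graph_ends"
  shows "end_point W \<in> remainder"
proof -
  have "end_point W \<noteq> embed x" if x: "x \<in> carrier G" for x
  proof
    define n where "n = nat \<lceil>len x\<rceil>"
    have "x \<in> gball n" unfolding gball_def n_def using x by simp linarith
    then have "x \<notin> W n" using outer_components_subset[OF graph_ends_component[OF W]] by blast
    moreover assume "end_point W = embed x"
    then have "indicator (W n) x = (1 :: real)"
      using end_point_indicator[OF W graph_ends_component[OF W]]
        indicator_outer_component_GO[OF graph_ends_component[OF W]]
      by (metis CF_embed_def)
    ultimately show False by (simp add: indicator_def)
  qed
  then show ?thesis using end_point_in_closure[OF W] unfolding CF_remainder_def by blast
qed

lemma inj_on_end_point: "inj_on end_point graph_ends"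
proof (rule inj_onI)
  fix W W' assume W: "W \<in> graph_ends" and W': "W' \<in> graph_ends" and eq: "end_point W = end_point W'"
  show "W = W'"
  proof
    fix n
    have "end_point W' (indicator (W n)) = 1"
      using eq end_point_indicator[OF W graph_ends_component[OF W]] by simp
    then show "W n = W' n"
      using end_point_indicator[OF W' graph_ends_component[OF W]] by (simp split: if_splits)
  qed
qed

theorem remainder_eqpoll_graph_ends: "remainder \<approx> graph_ends"
proof (rule lepoll_antisym)
  show "remainder \<lesssim> graph_ends"
    unfolding lepoll_def using inj_on_point_end point_end_graph_ends by blast
  show "graph_ends \<lesssim> remainder"
    unfolding lepoll_def using inj_on_end_point end_point_remainder by blast
qed

end

section \<open>The Cayley graph as a topological space\<close>

context fg_metric_group
begin

abbreviation cpoint :: "'a \<Rightarrow> 'a \<Rightarrow> real \<Rightarrow> 'a + ('a \<times> 'a \<times> real) set" where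
  "cpoint g s t \<equiv> cayley_point G (g, s, t)"

abbreviation \<Gamma> :: "('a + ('a \<times> 'a \<times> real) set) topology" where "\<Gamma> \<equiv> cayley_top G S"

lemma openin_cayley_top:
  "openin \<Gamma> U \<longleftrightarrow> U \<subseteq> cayley_set G S \<and>
     (\<forall>g\<in>carrier G. \<forall>s\<in>S. openin (top_of_set {0..1}) {t \<in> {0..1}. cpoint g s t \<in> U})"
  (is "_ \<longleftrightarrow> ?open U")
proof -
  have "istopology ?open"
    unfolding istopology_def
  proof (rule conjI; intro allI impI)
    fix U V assume "?open U" "?open V"
    moreover have "{t \<in> {0..1}. cpoint g s t \<in> U \<inter> V} =
        {t \<in> {0..1}. cpoint g s t \<in> U} \<inter> {t \<in> {0..1}. cpoint g s t \<in> V}" for g s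
      by blast
    ultimately show "?open (U \<inter> V)" by (auto intro: openin_Int)
  next
    fix \<U> assume "\<forall>U\<in>\<U>. ?open U"
    moreover have "{t \<in> {0..1}. cpoint g s t \<in> \<Union>\<U>} = (\<Union>U\<in>\<U>. {t \<in> {0..1}. cpoint g s t \<in> U})" for g s
      by blast
    ultimately show "?open (\<Union>\<U>)" by (auto intro!: openin_Union)
  qed
  then show ?thesis unfolding cayley_top_def by simp
qed

lemma topspace_cayley_top: "topspace \<Gamma> = cayley_set G S"
proof
  show "topspace \<Gamma> \<subseteq> cayley_set G S" using openin_topspace[of \<Gamma>] openin_cayley_top by blast
  have "{t \<in> {0..1}. cpoint g s t \<in> cayley_set G S} = {0..1}" if "g \<in> carrier G" "s \<in> S" for g s
    using that unfolding cayley_set_def by blast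
  then have "openin \<Gamma> (cayley_set G S)" unfolding openin_cayley_top by simp
  then show "cayley_set G S \<subseteq> topspace \<Gamma>" by (rule openin_subset)
qed

lemma cpoint_in_topspace: "g \<in> carrier G \<Longrightarrow> s \<in> S \<Longrightarrow> t \<in> {0..1} \<Longrightarrow> cpoint g s t \<in> topspace \<Gamma>"
  unfolding topspace_cayley_top cayley_set_def by blast

lemma topspace_cayley_topE:
  assumes "y \<in> topspace \<Gamma>"
  obtains g s t where "g \<in> carrier G" "s \<in> S" "t \<in> {0..1}" "y = cpoint g s t"
  using assms unfolding topspace_cayley_top cayley_set_def by blast

lemma continuous_map_cpoint:
  "g \<in> carrier G \<Longrightarrow> s \<in> S \<Longrightarrow> continuous_map (top_of_set {0..1}) \<Gamma> (cpoint g s)"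
  unfolding continuous_map openin_cayley_top using cpoint_in_topspace by auto

lemma continuous_map_cayley_top_real:
  assumes "\<And>g s. g \<in> carrier G \<Longrightarrow> s \<in> S \<Longrightarrow> continuous_on {0..1} (\<lambda>t. f (cpoint g s t))"
  shows "continuous_map \<Gamma> euclideanreal f"
  unfolding continuous_map
proof (intro conjI allI impI)
  fix V assume "openin euclideanreal V"
  then have "open V" by simp
  have "{t \<in> {0..1}. cpoint g s t \<in> {x \<in> topspace \<Gamma>. f x \<in> V}} = {0..1} \<inter> (\<lambda>t. f (cpoint g s t)) -` V"
    if "g \<in> carrier G" "s \<in> S" for g s
    using cpoint_in_topspace[OF that] by auto
  then show "openin \<Gamma> {x \<in> topspace \<Gamma>. f x \<in> V}"
    unfolding openin_cayley_top topspace_cayley_top[symmetric]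
    using continuous_openin_preimage_gen[OF assms \<open>open V\<close>] by auto
qed simp

lemma cpoint_0: "cpoint g s 0 = Inl g" and cpoint_1: "cpoint g s 1 = Inl (g \<otimes> s)"
  by (simp_all add: cayley_point_def)

lemma cpoint_interior:
  "0 < t \<Longrightarrow> t < 1 \<Longrightarrow>
    cpoint g s t = Inr (if s = \<one> then {(g, s, t)} else {(g, s, t), (g \<otimes> s, inv s, 1 - t)})"
  by (simp add: cayley_point_def)

lemma cpoint_flip:
  assumes "g \<in> carrier G" "s \<in> S" "s \<noteq> \<one>" "t \<in> {0..1}"
  shows "cpoint (g \<otimes> s) (inv s) (1 - t) = cpoint g s t"
proof -
  have "g \<otimes> s \<otimes> inv s = g" using assms by (simp add: m_assoc S_carrier)
  moreover have "inv s \<noteq> \<one>" using assms(3) S_carrier[OF assms(2)] by (metis inv_one inv_inv)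
  ultimately show ?thesis using assms S_carrier[OF assms(2)] by (auto simp: cayley_point_def insert_commute)
qed

definition endpoint :: "'a \<Rightarrow> 'a \<Rightarrow> real \<Rightarrow> 'a" where
  "endpoint g s t = (if t = 0 then g else g \<otimes> s)"

lemma cpoint_eq_cases:
  assumes "t \<in> {0..1}" "t' \<in> {0..1}" "cpoint g s t = cpoint g' s' t'"
  shows "(t \<in> {0, 1} \<and> t' \<in> {0, 1} \<and> endpoint g s t = endpoint g' s' t') \<or>
    (0 < t \<and> t < 1 \<and> ((g', s', t') = (g, s, t) \<or> (g', s', t') = (g \<otimes> s, inv s, 1 - t)))"
proof (cases "t \<in> {0, 1}"; cases "t' \<in> {0, 1}")
  assume "t \<notin> {0, 1}" "t' \<notin> {0, 1}"
  then have "0 < t" "t < 1" "0 < t'" "t' < 1" using assms(1,2) by auto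
  then have "(g', s', t') \<in> (if s = \<one> then {(g, s, t)} else {(g, s, t), (g \<otimes> s, inv s, 1 - t)})"
    using assms(3) cpoint_interior[of t g s] cpoint_interior[of t' g' s'] by auto
  then show ?thesis using \<open>0 < t\<close> \<open>t < 1\<close> by (auto split: if_splits)
qed (use assms in \<open>auto simp: cayley_point_def endpoint_def split: if_splits\<close>)

definition edge_height :: "'a \<Rightarrow> 'a \<Rightarrow> real \<Rightarrow> real" where
  "edge_height g s t = (1 - t) * len g + t * len (g \<otimes> s)"

definition height :: "'a + ('a \<times> 'a \<times> real) set \<Rightarrow> real" where
  "height y = (THE r. \<exists>g s t. g \<in> carrier G \<and> s \<in> S \<and> t \<in> {0..1} \<and> y = cpoint g s t \<and> r = edge_height g s t)"

lemma edge_height_cong: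
  assumes "g \<in> carrier G" "s \<in> S" "t \<in> {0..1}" "t' \<in> {0..1}" "cpoint g s t = cpoint g' s' t'"
  shows "edge_height g s t = edge_height g' s' t'"
proof -
  have "g \<otimes> s \<otimes> inv s = g" using assms(1,2) by (simp add: m_assoc S_carrier)
  then have "edge_height (g \<otimes> s) (inv s) (1 - t) = edge_height g s t"
    unfolding edge_height_def by (simp add: algebra_simps)
  then show ?thesis
    using cpoint_eq_cases[OF assms(3-5)] by (auto simp: edge_height_def endpoint_def)
qed

lemma height_cpoint:
  assumes "g \<in> carrier G" "s \<in> S" "t \<in> {0..1}"
  shows "height (cpoint g s t) = edge_height g s t"
  unfolding height_def
proof (rule the_equality)
  fix r assume "\<exists>g' s' t'. g' \<in> carrier G \<and> s' \<in> S \<and> t' \<in> {0..1} \<and> cpoint g s t = cpoint g' s' t' \<and> r = edge_height g' s' t'"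
  then show "r = edge_height g s t" using edge_height_cong[OF assms] by metis
qed (use assms in blast)

lemma continuous_map_height: "continuous_map \<Gamma> euclideanreal height"
proof (rule continuous_map_cayley_top_real)
  fix g s assume "g \<in> carrier G" "s \<in> S"
  have "continuous_on {0..1} (edge_height g s)" unfolding edge_height_def by (intro continuous_intros)
  then show "continuous_on {0..1} (\<lambda>t. height (cpoint g s t))"
    using height_cpoint[OF \<open>g \<in> carrier G\<close> \<open>s \<in> S\<close>] by (metis (no_types, lifting) continuous_on_cong)
qed

lemma edge_height_between:
  assumes "t \<in> {0..1}"
  shows "min (len g) (len (g \<otimes> s)) \<le> edge_height g s t" "edge_height g s t \<le> max (len g) (len (g \<otimes> s))"
proof -
  have "edge_height g s t = (1 - t) * len g + t * len (g \<otimes> s)" by (simp add: edge_height_def)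
  moreover have "(1 - t) * min (len g) (len (g \<otimes> s)) \<le> (1 - t) * len g"
    "t * min (len g) (len (g \<otimes> s)) \<le> t * len (g \<otimes> s)"
    "(1 - t) * len g \<le> (1 - t) * max (len g) (len (g \<otimes> s))"
    "t * len (g \<otimes> s) \<le> t * max (len g) (len (g \<otimes> s))"
    using assms by (auto intro: mult_left_mono)
  ultimately show "min (len g) (len (g \<otimes> s)) \<le> edge_height g s t" "edge_height g s t \<le> max (len g) (len (g \<otimes> s))"
    by (simp_all add: algebra_simps)
qed

lemma high_edge_outer:
  assumes "g \<in> carrier G" "s \<in> S" "t \<in> {0..1}" "edge_height g s t > real n + gen_bound"
  shows "(g, g \<otimes> s) \<in> outer_edges n"
proof -
  have "max (len g) (len (g \<otimes> s)) > real n + gen_bound"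
    using edge_height_between(2)[OF assms(3), of g s] assms(4) by linarith
  then have "len g > real n" "len (g \<otimes> s) > real n" using len_mult_gen[OF assms(1,2)] by auto
  then show ?thesis unfolding outer_edges_def edges_def gball_def using assms(1,2) by auto
qed

lemma high_cpoint_eq_connected:
  assumes "g \<in> carrier G" "s \<in> S" "t \<in> {0..1}" "g' \<in> carrier G" "s' \<in> S" "t' \<in> {0..1}"
    and eq: "cpoint g s t = cpoint g' s' t'" and high: "edge_height g s t > real n + gen_bound"
  shows "(g, g') \<in> (outer_edges n)\<^sup>*"
proof -
  have high': "edge_height g' s' t' > real n + gen_bound"
    using edge_height_cong[OF assms(1-3,6) eq] high by simp
  have to_endpoint: "(g, endpoint g s t) \<in> (outer_edges n)\<^sup>*" "(g', endpoint g' s' t') \<in> (outer_edges n)\<^sup>*"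
    using high_edge_outer[OF assms(1-3) high] high_edge_outer[OF assms(4-6) high']
    by (auto simp: endpoint_def)
  from cpoint_eq_cases[OF assms(3,6) eq] show ?thesis
  proof
    assume "t \<in> {0, 1} \<and> t' \<in> {0, 1} \<and> endpoint g s t = endpoint g' s' t'"
    then show ?thesis using to_endpoint sym_rtrancl_outer_edges by (metis rtrancl_trans symD)
  qed (use high_edge_outer[OF assms(1-3) high] in auto)
qed

definition star :: "'a set \<Rightarrow> ('a + ('a \<times> 'a \<times> real) set) set" where
  "star W = {cpoint g s t | g s t. g \<in> W \<and> s \<in> S \<and> t \<in> {0..1}}"

definition high :: "nat \<Rightarrow> ('a + ('a \<times> 'a \<times> real) set) set" where
  "high n = {y \<in> topspace \<Gamma>. height y > real n + gen_bound}"

lemma vertex_in_star: "x \<in> W \<Longrightarrow> s \<in> S \<Longrightarrow> Inl x \<in> star W"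
  unfolding star_def by (metis (mono_tags, lifting) atLeastAtMost_iff cpoint_0 mem_Collect_eq order_refl zero_le_one)

lemma highE:
  assumes "y \<in> high n"
  obtains g s t where "g \<in> carrier G" "s \<in> S" "t \<in> {0..1}" "y = cpoint g s t"
    "edge_height g s t > real n + gen_bound"
  using assms height_cpoint unfolding high_def by (metis (no_types, lifting) mem_Collect_eq topspace_cayley_topE)

lemma high_cpoint_in_star_iff:
  assumes "g \<in> carrier G" "s \<in> S" "t \<in> {0..1}" "edge_height g s t > real n + gen_bound"
    and W: "W \<in> outer_components n"
  shows "cpoint g s t \<in> star W \<longleftrightarrow> g \<in> W"
proof
  assume "cpoint g s t \<in> star W"
  then obtain g' s' t' where "g' \<in> W" "s' \<in> S" "t' \<in> {0..1}" "cpoint g s t = cpoint g' s' t'"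
    unfolding star_def by blast
  moreover have "g' \<in> carrier G" using \<open>g' \<in> W\<close> outer_components_subset[OF W] by blast
  ultimately have "(g', g) \<in> (outer_edges n)\<^sup>*"
    using high_cpoint_eq_connected[OF assms(1-3)] assms(4) sym_rtrancl_outer_edges by (metis symD)
  then show "g \<in> W" using outer_components_mem_iff[OF W \<open>g' \<in> W\<close>] by blast
qed (use assms in \<open>auto simp: star_def\<close>)

lemma openin_high_star:
  assumes W: "W \<in> outer_components n"
  shows "openin \<Gamma> (high n \<inter> star W)" "openin \<Gamma> (high n - star W)"
proof -
  have high_iff: "cpoint g s t \<in> high n \<longleftrightarrow> edge_height g s t > real n + gen_bound"
    if "g \<in> carrier G" "s \<in> S" "t \<in> {0..1}" for g s t
    unfolding high_def using height_cpoint[OF that] cpoint_in_topspace[OF that] by simp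
  have "openin (top_of_set {0..1}) {t \<in> {0..1}. edge_height g s t > c}" for g s c
  proof -
    have "continuous_on {0..1} (edge_height g s)" unfolding edge_height_def by (intro continuous_intros)
    from continuous_openin_preimage_gen[OF this open_greaterThan, of c]
    show ?thesis by (simp add: vimage_def Int_def conj_commute)
  qed
  moreover have "{t \<in> {0..1}. cpoint g s t \<in> high n \<inter> star W} =
      (if g \<in> W then {t \<in> {0..1}. edge_height g s t > real n + gen_bound} else {})"
    "{t \<in> {0..1}. cpoint g s t \<in> high n - star W} =
      (if g \<in> W then {} else {t \<in> {0..1}. edge_height g s t > real n + gen_bound})"
    if "g \<in> carrier G" "s \<in> S" for g s
    using high_iff[OF that] high_cpoint_in_star_iff[OF that _ _ W] by auto
  moreover have "high n \<subseteq> cayley_set G S" unfolding high_def topspace_cayley_top by blast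
  ultimately show "openin \<Gamma> (high n \<inter> star W)" "openin \<Gamma> (high n - star W)"
    unfolding openin_cayley_top by auto
qed

lemma connectedin_high_subset_star:
  assumes "connectedin \<Gamma> U" "U \<subseteq> high n" "W \<in> outer_components n" "U \<inter> star W \<noteq> {}"
  shows "U \<subseteq> star W"
  using assms openin_high_star[OF assms(3)] unfolding connectedin by blast

lemma high_in_star:
  assumes "y \<in> high n"
  obtains W where "W \<in> outer_components n" "y \<in> star W"
proof -
  obtain g s t where gst: "g \<in> carrier G" "s \<in> S" "t \<in> {0..1}" "y = cpoint g s t"
    and "edge_height g s t > real n + gen_bound"
    using assms by (rule highE)
  then have "g \<in> carrier G - gball n" using high_edge_outer outer_edges_subset by blast
  then have "outer_component n g \<in> outer_components n" unfolding outer_components_def by blast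
  moreover have "y \<in> star (outer_component n g)" unfolding star_def using gst outer_component_self by blast
  ultimately show thesis using that by blast
qed

lemma high_star_unique:
  assumes "y \<in> high n" "W \<in> outer_components n" "W' \<in> outer_components n" "y \<in> star W" "y \<in> star W'"
  shows "W = W'"
proof -
  obtain g s t where "g \<in> carrier G" "s \<in> S" "t \<in> {0..1}" "y = cpoint g s t"
    "edge_height g s t > real n + gen_bound"
    using assms(1) by (rule highE)
  then have "g \<in> W" "g \<in> W'" using high_cpoint_in_star_iff assms(2-5) by blast+
  then show ?thesis using outer_components_disjoint[OF assms(2,3)] by blast
qed

definition edge :: "'a \<Rightarrow> 'a \<Rightarrow> ('a + ('a \<times> 'a \<times> real) set) set" where
  "edge g s = cpoint g s ` {0..1}"

lemma compactin_edge: "g \<in> carrier G \<Longrightarrow> s \<in> S \<Longrightarrow> compactin \<Gamma> (edge g s)"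
  unfolding edge_def
  by (rule image_compactin[OF _ continuous_map_cpoint]) (auto simp: compactin_subtopology)

lemma connectedin_edge: "g \<in> carrier G \<Longrightarrow> s \<in> S \<Longrightarrow> connectedin \<Gamma> (edge g s)"
  unfolding edge_def
  by (rule connectedin_continuous_map_image[OF continuous_map_cpoint]) (auto simp: connectedin_subtopology)

lemma vertices_in_edge: "Inl g \<in> edge g s" "Inl (g \<otimes> s) \<in> edge g s"
  unfolding edge_def using cpoint_0 cpoint_1 by (metis atLeastAtMost_iff image_eqI order_refl zero_le_one)+

lemma height_le_subset_edges: "{y \<in> topspace \<Gamma>. height y \<le> real M} \<subseteq> (\<Union>(g, s) \<in> gball M \<times> S. edge g s)"
proof
  fix y assume "y \<in> {y \<in> topspace \<Gamma>. height y \<le> real M}"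
  then obtain g s t where gst: "g \<in> carrier G" "s \<in> S" "t \<in> {0..1}" "y = cpoint g s t"
    and "edge_height g s t \<le> real M"
    using height_cpoint by (metis (no_types, lifting) mem_Collect_eq topspace_cayley_topE)
  then have low: "min (len g) (len (g \<otimes> s)) \<le> real M" using edge_height_between(1)[OF gst(3), of g s] by linarith
  show "y \<in> (\<Union>(g, s) \<in> gball M \<times> S. edge g s)"
  proof (cases "len g \<le> real M")
    case True
    then show ?thesis using gst unfolding gball_def edge_def by blast
  next
    case False
    then have "len (g \<otimes> s) \<le> real M" "s \<noteq> \<one>" using low gst(1) by auto
    moreover have "inv s \<in> S" "1 - t \<in> {0..1}" using S_inv gst(2,3) by auto
    moreover have "y = cpoint (g \<otimes> s) (inv s) (1 - t)" using cpoint_flip gst \<open>s \<noteq> \<one>\<close> by simp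
    ultimately show ?thesis using gst S_carrier unfolding gball_def edge_def by blast
  qed
qed

lemma compactin_height_le: "compactin \<Gamma> {y \<in> topspace \<Gamma>. height y \<le> r}"
proof -
  define M where "M = nat \<lceil>r\<rceil>"
  have "compactin \<Gamma> (edge g s)" if "(g, s) \<in> gball M \<times> S" for g s
    using that gball_subset compactin_edge by blast
  then have "compactin \<Gamma> (\<Union>(g, s) \<in> gball M \<times> S. edge g s)"
    using finite_gball finite_S by (intro compactin_Union) auto
  moreover have "r \<le> real M" unfolding M_def by (rule real_nat_ceiling_ge)
  then have "{y \<in> topspace \<Gamma>. height y \<le> r} \<subseteq> (\<Union>(g, s) \<in> gball M \<times> S. edge g s)"
    using height_le_subset_edges[of M] by force
  moreover have "closedin \<Gamma> {y \<in> topspace \<Gamma>. height y \<le> r}"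
    using closedin_continuous_map_preimage[OF continuous_map_height, of "{..r}"] by simp
  ultimately show ?thesis by (rule closed_compactin)
qed

lemma height_bounded_compactin:
  assumes "compactin \<Gamma> A"
  obtains R where "\<And>y. y \<in> A \<Longrightarrow> height y \<le> R"
proof -
  have "compact (height ` A)" using image_compactin[OF assms continuous_map_height] by simp
  then show thesis using that compact_imp_bounded bounded_real by (metis abs_le_D1 imageI)
qed

lemma S_nonempty: "x \<in> carrier G - gball n \<Longrightarrow> S \<noteq> {}"
proof -
  have "x = \<one>" if "S = {}" "x \<in> generate G S" for x
    using that(2) unfolding that(1) by (induction rule: generate.induct) auto
  then show "x \<in> carrier G - gball n \<Longrightarrow> S \<noteq> {}" using generate_S one_in_gball by blast
qed

lemma vertex_in_topspace: "x \<in> carrier G - gball n \<Longrightarrow> Inl x \<in> topspace \<Gamma>"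
  using S_nonempty cpoint_in_topspace[of x _ 0] cpoint_0 by fastforce

definition subgraph :: "'a set \<Rightarrow> ('a + ('a \<times> 'a \<times> real) set) set" where
  "subgraph W = {cpoint g s t | g s t. g \<in> W \<and> s \<in> S \<and> t \<in> {0..1} \<and> (t = 0 \<or> g \<otimes> s \<in> W)}"

lemma vertex_in_subgraph: "x \<in> W \<Longrightarrow> s \<in> S \<Longrightarrow> Inl x \<in> subgraph W"
  unfolding subgraph_def by (metis (mono_tags, lifting) atLeastAtMost_iff cpoint_0 mem_Collect_eq order_refl zero_le_one)

lemma edge_subset_subgraph: "x \<in> W \<Longrightarrow> s \<in> S \<Longrightarrow> x \<otimes> s \<in> W \<Longrightarrow> edge x s \<subseteq> subgraph W"
  unfolding subgraph_def edge_def by blast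

lemma subgraph_high:
  assumes W: "W \<in> outer_components n" and "y \<in> subgraph W"
  shows "y \<in> topspace \<Gamma>" "height y > real n"
proof -
  obtain g s t where gst: "g \<in> W" "s \<in> S" "t \<in> {0..1}" "t = 0 \<or> g \<otimes> s \<in> W" "y = cpoint g s t"
    using assms(2) unfolding subgraph_def by blast
  then have "g \<in> carrier G" "len g > real n" using outer_components_subset[OF W] by (auto simp: gball_def)
  then show "y \<in> topspace \<Gamma>" using cpoint_in_topspace gst by blast
  have "edge_height g s t > real n"
  proof (cases "t = 0")
    case False
    then have "len (g \<otimes> s) > real n"
      using gst(4) outer_components_subset[OF W] \<open>g \<in> carrier G\<close> gst(2) S_carrier by (auto simp: gball_def)
    then show ?thesis using edge_height_between(1)[OF gst(3), of g s] \<open>len g > real n\<close> by linarith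
  qed (simp add: edge_height_def \<open>len g > real n\<close>)
  then show "height y > real n" using height_cpoint \<open>g \<in> carrier G\<close> gst by simp
qed

lemma connectedin_Un_edge:
  assumes "connectedin \<Gamma> P" "Inl g \<in> P" "g \<in> carrier G" "s \<in> S"
  shows "connectedin \<Gamma> (P \<union> edge g s)"
  using connectedin_Un[OF assms(1) connectedin_edge[OF assms(3,4)]] assms(2) vertices_in_edge(1)
  by blast

lemma subgraph_path:
  assumes W: "W \<in> outer_components n" and "a \<in> W" "(a, x) \<in> (outer_edges n)\<^sup>*"
  shows "\<exists>P. connectedin \<Gamma> P \<and> P \<subseteq> subgraph W \<and> Inl a \<in> P \<and> Inl x \<in> P"
  using assms(3)
proof (induction rule: rtrancl_induct)
  case base
  obtain s where "s \<in> S" using S_nonempty outer_components_subset[OF W] \<open>a \<in> W\<close> by blast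
  then have "Inl a \<in> topspace \<Gamma>" "Inl a \<in> subgraph W"
    using vertex_in_topspace vertex_in_subgraph outer_components_subset[OF W] \<open>a \<in> W\<close> by blast+
  then show ?case by (intro exI[of _ "{Inl a}"]) simp
next
  case (step y z)
  then obtain P where P: "connectedin \<Gamma> P" "P \<subseteq> subgraph W" "Inl a \<in> P" "Inl y \<in> P" by blast
  obtain s where s: "y \<in> carrier G" "s \<in> S" "z = y \<otimes> s"
    using step.hyps(2) unfolding outer_edges_def edges_def by blast
  have "y \<in> W" "z \<in> W" using outer_components_mem_iff[OF W \<open>a \<in> W\<close>] step.hyps by (blast intro: rtrancl_into_rtrancl)+
  then have "P \<union> edge y s \<subseteq> subgraph W" using P(2) edge_subset_subgraph s by blast
  moreover have "Inl z \<in> edge y s" using vertices_in_edge(2) s(3) by simp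
  ultimately show ?case using connectedin_Un_edge[OF P(1,4) s(1,2)] P(3) by blast
qed

lemma connectedin_subgraph:
  assumes W: "W \<in> outer_components n"
  shows "connectedin \<Gamma> (subgraph W)"
proof -
  obtain a where "a \<in> W" using outer_components_nonempty[OF W] by blast
  define \<P> where "\<P> = {P. connectedin \<Gamma> P \<and> P \<subseteq> subgraph W \<and> Inl a \<in> P}"
  have "subgraph W \<subseteq> \<Union>\<P>"
  proof
    fix y assume "y \<in> subgraph W"
    then obtain g s t where gst: "g \<in> W" "s \<in> S" "t \<in> {0..1}" "t = 0 \<or> g \<otimes> s \<in> W" "y = cpoint g s t"
      unfolding subgraph_def by blast
    obtain P where P: "connectedin \<Gamma> P" "P \<subseteq> subgraph W" "Inl a \<in> P" "Inl g \<in> P"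
      using subgraph_path[OF W \<open>a \<in> W\<close>] outer_components_mem_iff[OF W \<open>a \<in> W\<close>] gst(1) by blast
    show "y \<in> \<Union>\<P>"
    proof (cases "t = 0")
      case True
      then show ?thesis using P gst(5) cpoint_0 unfolding \<P>_def by auto
    next
      case False
      have "g \<in> carrier G" using gst(1) outer_components_subset[OF W] by blast
      then have "connectedin \<Gamma> (P \<union> edge g s)" "P \<union> edge g s \<subseteq> subgraph W" "y \<in> edge g s"
        using connectedin_Un_edge P edge_subset_subgraph gst False unfolding edge_def by auto
      then show ?thesis using P(3) unfolding \<P>_def by blast
    qed
  qed
  moreover have "connectedin \<Gamma> (\<Union>\<P>)" by (rule connectedin_Union) (auto simp: \<P>_def)
  moreover have "\<Union>\<P> \<subseteq> subgraph W" unfolding \<P>_def by blast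
  ultimately show ?thesis by (metis subset_antisym)
qed

end

section \<open>Freudenthal ends of the Cayley graph\<close>

lemma exhaustion_mono:
  assumes "exhaustion X K" "i \<le> j"
  shows "K i \<subseteq> K j"
  using assms(2)
proof (induction rule: dec_induct)
  case (step k)
  then show ?case
    using assms(1) interior_of_subset[of X "K (Suc k)"] unfolding exhaustion_def by blast
qed simp

lemma exhaustion_compactin_subset:
  assumes "exhaustion X K" "compactin X A"
  obtains i where "A \<subseteq> K i"
proof -
  define V where "V i = X interior_of K (Suc i)" for i
  have "A \<subseteq> \<Union>(range V)"
    using compactin_subset_topspace[OF assms(2)] assms(1) unfolding exhaustion_def V_def by blast
  moreover have "\<forall>U\<in>range V. openin X U" by (simp add: V_def)
  ultimately obtain \<F> where "finite \<F>" "\<F> \<subseteq> range V" "A \<subseteq> \<Union>\<F>"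
    using assms(2) unfolding compactin_def by meson
  then obtain I where "finite I" "A \<subseteq> (\<Union>i\<in>I. V i)" using finite_subset_image by metis
  moreover have "V i \<subseteq> K (Suc (Max (insert 0 I)))" if "i \<in> I" for i
  proof -
    have "i \<le> Max (insert 0 I)" using \<open>finite I\<close> that by simp
    then show ?thesis
      using interior_of_subset[of X "K (Suc i)"] exhaustion_mono[OF assms(1), of "Suc i"]
      unfolding V_def by force
  qed
  ultimately show thesis using that by blast
qed

lemma freudenthal_ends_antimono:
  assumes "U \<in> freudenthal_ends X K" "i \<le> j"
  shows "U j \<subseteq> U i"
  using assms(2)
proof (induction rule: dec_induct)
  case (step k)
  then show ?case using assms(1) unfolding freudenthal_ends_def by blast
qed simp

lemma connected_components_of_complement:
  assumes "C \<in> connected_components_of (subtopology X (topspace X - K))"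
  shows "connectedin X C" "C \<subseteq> topspace X - K" "C \<noteq> {}"
  using connectedin_connected_components_of[OF assms] nonempty_connected_components_of[OF assms]
  by (auto simp: connectedin_subtopology)

locale fg_metric_group_exhaustion = fg_metric_group +
  fixes K :: "nat \<Rightarrow> ('a + ('a \<times> 'a \<times> real) set) set"
  assumes exhaustion: "exhaustion (cayley_top G S) K"
begin

abbreviation outside :: "nat \<Rightarrow> ('a + ('a \<times> 'a \<times> real) set) topology" where
  "outside i \<equiv> subtopology \<Gamma> (topspace \<Gamma> - K i)"

lemma connectedin_outside: "connectedin \<Gamma> A \<Longrightarrow> A \<subseteq> topspace \<Gamma> - K i \<Longrightarrow> connectedin (outside i) A"
  by (simp add: connectedin_subtopology)

lemma freudenthal_ends_component:
  "U \<in> freudenthal_ends \<Gamma> K \<Longrightarrow> U i \<in> connected_components_of (outside i)"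
  unfolding freudenthal_ends_def by blast

definition level_index :: "nat \<Rightarrow> nat" where
  "level_index n = (LEAST i. n \<le> i \<and> {y \<in> topspace \<Gamma>. height y \<le> real n + gen_bound} \<subseteq> K i)"

definition height_bound :: "nat \<Rightarrow> nat" where
  "height_bound i = (LEAST n. i \<le> n \<and> (\<forall>y\<in>K i. height y \<le> real n))"

lemma level_index: "n \<le> level_index n" "{y \<in> topspace \<Gamma>. height y \<le> real n + gen_bound} \<subseteq> K (level_index n)"
proof -
  obtain i where "{y \<in> topspace \<Gamma>. height y \<le> real n + gen_bound} \<subseteq> K i"
    using exhaustion_compactin_subset[OF exhaustion compactin_height_le] by blast
  then have "\<exists>i. n \<le> i \<and> {y \<in> topspace \<Gamma>. height y \<le> real n + gen_bound} \<subseteq> K i"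
    using exhaustion_mono[OF exhaustion, of i "max n i"] by (intro exI[of _ "max n i"]) auto
  from LeastI_ex[OF this]
  show "n \<le> level_index n" "{y \<in> topspace \<Gamma>. height y \<le> real n + gen_bound} \<subseteq> K (level_index n)"
    unfolding level_index_def by blast+
qed

lemma level_index_mono: "level_index n \<le> level_index (Suc n)"
  unfolding level_index_def[of n] using level_index[where n = "Suc n"] by (intro Least_le) force

lemma outside_level_index_high: "topspace \<Gamma> - K (level_index n) \<subseteq> high n"
  using level_index(2) unfolding high_def by force

lemma height_bound: "i \<le> height_bound i" "y \<in> K i \<Longrightarrow> height y \<le> real (height_bound i)"
proof -
  have "compactin \<Gamma> (K i)" using exhaustion unfolding exhaustion_def by blast
  then obtain R where R: "\<And>y. y \<in> K i \<Longrightarrow> height y \<le> R" using height_bounded_compactin by blast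
  have "R \<le> real (max i (nat \<lceil>R\<rceil>))"
    by (metis max.cobounded2 of_nat_le_iff order_trans real_nat_ceiling_ge)
  then have "\<forall>y\<in>K i. height y \<le> real (max i (nat \<lceil>R\<rceil>))" using R by force
  then have "\<exists>n. i \<le> n \<and> (\<forall>y\<in>K i. height y \<le> real n)" by (intro exI[of _ "max i (nat \<lceil>R\<rceil>)"]) simp
  from LeastI_ex[OF this] show "i \<le> height_bound i" "y \<in> K i \<Longrightarrow> height y \<le> real (height_bound i)"
    unfolding height_bound_def by blast+
qed

lemma height_bound_mono: "height_bound i \<le> height_bound (Suc i)"
  unfolding height_bound_def[of i]
  using height_bound[where i = "Suc i"] exhaustion_mono[OF exhaustion, of i "Suc i"]
  by (intro Least_le) force

lemma subgraph_outside:
  "W \<in> outer_components (height_bound i) \<Longrightarrow> subgraph W \<subseteq> topspace \<Gamma> - K i"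
  using subgraph_high height_bound(2) by fastforce

lemma graph_end_of_ex1:
  assumes U: "U \<in> freudenthal_ends \<Gamma> K"
  shows "\<exists>!W. W \<in> outer_components n \<and> U (level_index n) \<subseteq> star W"
proof -
  define j where "j = level_index n"
  have U_j: "connectedin \<Gamma> (U j)" "U j \<subseteq> high n" "U j \<noteq> {}"
    using connected_components_of_complement[OF freudenthal_ends_component[OF U]]
      outside_level_index_high unfolding j_def by blast+
  then obtain y where "y \<in> U j" "y \<in> high n" by blast
  then obtain W where W: "W \<in> outer_components n" "y \<in> star W" using high_in_star by blast
  then have "U j \<subseteq> star W" using connectedin_high_subset_star[OF U_j(1,2)] \<open>y \<in> U j\<close> by blast
  moreover have "W' = W" if "W' \<in> outer_components n" "U j \<subseteq> star W'" for W'
    using high_star_unique[OF \<open>y \<in> high n\<close> W(1) that(1) W(2)] that(2) \<open>y \<in> U j\<close> by blast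
  ultimately show ?thesis using W(1) unfolding j_def by blast
qed

definition graph_end_of :: "(nat \<Rightarrow> ('a + ('a \<times> 'a \<times> real) set) set) \<Rightarrow> nat \<Rightarrow> 'a set" where
  "graph_end_of U n = (THE W. W \<in> outer_components n \<and> U (level_index n) \<subseteq> star W)"

lemma graph_end_of:
  assumes "U \<in> freudenthal_ends \<Gamma> K"
  shows "graph_end_of U n \<in> outer_components n" "U (level_index n) \<subseteq> star (graph_end_of U n)"
  using theI'[OF graph_end_of_ex1[OF assms]] unfolding graph_end_of_def by blast+

lemma freudenthal_tail_high:
  "U \<in> freudenthal_ends \<Gamma> K \<Longrightarrow> U (level_index n) \<subseteq> high n"
  using connected_components_of_complement(2)[OF freudenthal_ends_component] outside_level_index_high
  by (rule order_trans)

lemma freudenthal_tail_subset_subgraph: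
  assumes U: "U \<in> freudenthal_ends \<Gamma> K"
  shows "U (level_index n) \<subseteq> subgraph (graph_end_of U n)"
proof
  fix y assume y: "y \<in> U (level_index n)"
  define W where "W = graph_end_of U n"
  have W: "W \<in> outer_components n" "y \<in> star W" using graph_end_of[OF U] y unfolding W_def by blast+
  then obtain g s t where gst: "g \<in> W" "s \<in> S" "t \<in> {0..1}" "y = cpoint g s t" unfolding star_def by blast
  have "g \<in> carrier G" using gst(1) outer_components_subset[OF W(1)] by blast
  have "height y > real n + gen_bound" using y freudenthal_tail_high[OF U] unfolding high_def by blast
  then have "edge_height g s t > real n + gen_bound"
    using height_cpoint[OF \<open>g \<in> carrier G\<close> gst(2,3)] gst(4) by simp
  then have "(g, g \<otimes> s) \<in> outer_edges n"
    using high_edge_outer[OF \<open>g \<in> carrier G\<close> gst(2,3)] by blast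
  then have "g \<otimes> s \<in> W" using outer_components_mem_iff[OF W(1) gst(1)] by blast
  then show "y \<in> subgraph (graph_end_of U n)" unfolding subgraph_def W_def[symmetric] using gst by blast
qed

lemma graph_end_of_graph_ends:
  assumes U: "U \<in> freudenthal_ends \<Gamma> K"
  shows "graph_end_of U \<in> graph_ends"
  unfolding graph_ends_def
proof (intro CollectI allI conjI)
  fix n
  define W W' where "W = graph_end_of U n" and "W' = graph_end_of U (Suc n)"
  have W: "W \<in> outer_components n" "W' \<in> outer_components (Suc n)"
    using graph_end_of(1)[OF U] unfolding W_def W'_def by blast+
  then show "graph_end_of U n \<in> outer_components n" unfolding W_def by blast
  obtain y where y: "y \<in> U (level_index (Suc n))"
    using connected_components_of_complement(3)[OF freudenthal_ends_component[OF U]] by blast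
  then have "y \<in> star W'" using graph_end_of(2)[OF U] unfolding W'_def by blast
  then obtain g s t where gst: "g \<in> W'" "s \<in> S" "t \<in> {0..1}" "y = cpoint g s t"
    unfolding star_def by blast
  have "g \<in> carrier G" using gst(1) outer_components_subset[OF W(2)] by blast
  have "height y > real (Suc n) + gen_bound" using y freudenthal_tail_high[OF U] unfolding high_def by blast
  then have high: "edge_height g s t > real n + gen_bound"
    using height_cpoint[OF \<open>g \<in> carrier G\<close> gst(2,3)] gst(4) by simp
  have "y \<in> star W"
    using y freudenthal_ends_antimono[OF U level_index_mono] graph_end_of(2)[OF U] unfolding W_def by blast
  then have "g \<in> W" using high_cpoint_in_star_iff[OF \<open>g \<in> carrier G\<close> gst(2,3) high W(1)] gst(4) by blast
  then show "graph_end_of U (Suc n) \<subseteq> graph_end_of U n"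
    using outer_components_nested[OF le_SucI[OF order_refl] W(2,1)] gst(1) unfolding W_def W'_def by blast
qed

lemma freudenthal_component_contains_subgraph:
  assumes U: "U \<in> freudenthal_ends \<Gamma> K"
  shows "subgraph (graph_end_of U (height_bound i)) \<subseteq> U i"
proof -
  define n where "n = height_bound i"
  define W where "W = graph_end_of U n"
  have "i \<le> level_index n" using height_bound(1) level_index(1) unfolding n_def by (meson order_trans)
  have "connectedin (outside i) (subgraph W)"
    using connectedin_outside[OF connectedin_subgraph subgraph_outside] graph_end_of(1)[OF U]
    unfolding W_def n_def by blast
  moreover have "U (level_index n) \<subseteq> subgraph W \<inter> U i"
    using freudenthal_tail_subset_subgraph[OF U] freudenthal_ends_antimono[OF U \<open>i \<le> level_index n\<close>]
    unfolding W_def by blast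
  then have "\<not> disjnt (U i) (subgraph W)"
    using connected_components_of_complement(3)[OF freudenthal_ends_component[OF U]]
    unfolding disjnt_def by blast
  ultimately show ?thesis
    using connected_components_of_maximal[OF freudenthal_ends_component[OF U]] unfolding W_def n_def by blast
qed

lemma inj_on_graph_end_of: "inj_on graph_end_of (freudenthal_ends \<Gamma> K)"
proof (rule inj_onI)
  fix U U' assume U: "U \<in> freudenthal_ends \<Gamma> K" and U': "U' \<in> freudenthal_ends \<Gamma> K"
    and eq: "graph_end_of U = graph_end_of U'"
  show "U = U'"
  proof
    fix i
    define W where "W = graph_end_of U (height_bound i)"
    have W: "W \<in> outer_components (height_bound i)" using graph_end_of(1)[OF U] unfolding W_def .
    obtain x where "x \<in> W" using outer_components_nonempty[OF W] by blast
    moreover obtain s where "s \<in> S"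
      using S_nonempty outer_components_subset[OF W] \<open>x \<in> W\<close> by blast
    ultimately have "Inl x \<in> subgraph W" by (rule vertex_in_subgraph)
    then have "Inl x \<in> U i" "Inl x \<in> U' i"
      using freudenthal_component_contains_subgraph[OF U, of i]
        freudenthal_component_contains_subgraph[OF U', of i] eq unfolding W_def by auto
    then show "U i = U' i"
      using connected_components_of_disjoint[OF freudenthal_ends_component[OF U] freudenthal_ends_component[OF U']]
      unfolding disjnt_def by blast
  qed
qed

definition freudenthal_end_of :: "(nat \<Rightarrow> 'a set) \<Rightarrow> nat \<Rightarrow> ('a + ('a \<times> 'a \<times> real) set) set" where
  "freudenthal_end_of W i = connected_component_of_set (outside i) (Inl (end_vertex W (height_bound i)))"

lemma end_vertex_in_subgraph:
  assumes W: "W \<in> graph_ends" and "n \<le> m"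
  shows "Inl (end_vertex W m) \<in> subgraph (W n)"
proof -
  have "end_vertex W m \<in> W n" using end_vertex[OF W \<open>n \<le> m\<close>] .
  moreover obtain s where "s \<in> S"
    using S_nonempty outer_components_subset[OF graph_ends_component[OF W]] calculation by blast
  ultimately show ?thesis by (rule vertex_in_subgraph)
qed

lemma freudenthal_end_of:
  assumes W: "W \<in> graph_ends"
  shows "freudenthal_end_of W i \<in> connected_components_of (outside i)"
    and "subgraph (W (height_bound i)) \<subseteq> freudenthal_end_of W i"
proof -
  have sub: "subgraph (W (height_bound i)) \<subseteq> topspace \<Gamma> - K i"
    using subgraph_outside[OF graph_ends_component[OF W]] .
  have x: "Inl (end_vertex W (height_bound i)) \<in> subgraph (W (height_bound i))"
    using end_vertex_in_subgraph[OF W order_refl] .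
  then show "freudenthal_end_of W i \<in> connected_components_of (outside i)"
    unfolding freudenthal_end_of_def using sub
    by (subst connected_component_in_connected_components_of) auto
  have "connectedin (outside i) (subgraph (W (height_bound i)))"
    using connectedin_outside[OF connectedin_subgraph[OF graph_ends_component[OF W]] sub] .
  then show "subgraph (W (height_bound i)) \<subseteq> freudenthal_end_of W i"
    unfolding freudenthal_end_of_def using connected_component_of_maximal x by fastforce
qed

lemma freudenthal_end_of_freudenthal_ends:
  assumes W: "W \<in> graph_ends"
  shows "freudenthal_end_of W \<in> freudenthal_ends \<Gamma> K"
  unfolding freudenthal_ends_def
proof (intro CollectI allI conjI)
  fix i
  show "freudenthal_end_of W i \<in> connected_components_of (outside i)"
    using freudenthal_end_of(1)[OF W] .
  have "K i \<subseteq> K (Suc i)" using exhaustion_mono[OF exhaustion] by simp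
  then have "connectedin (outside i) (freudenthal_end_of W (Suc i))"
    using connected_components_of_complement(1,2)[OF freudenthal_end_of(1)[OF W]]
    by (meson Diff_mono connectedin_outside order_refl order_trans)
  moreover have "Inl (end_vertex W (height_bound (Suc i))) \<in> freudenthal_end_of W i \<inter> freudenthal_end_of W (Suc i)"
    using end_vertex_in_subgraph[OF W height_bound_mono] end_vertex_in_subgraph[OF W order_refl]
      freudenthal_end_of(2)[OF W] by blast
  ultimately show "freudenthal_end_of W (Suc i) \<subseteq> freudenthal_end_of W i"
    using connected_components_of_maximal[OF freudenthal_end_of(1)[OF W]] unfolding disjnt_def by blast
qed

lemma freudenthal_end_of_subset_star:
  assumes W: "W \<in> graph_ends"
  shows "freudenthal_end_of W (level_index n) \<subseteq> star (W n)"
proof -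
  define i where "i = level_index n"
  define x where "x = end_vertex W (height_bound i)"
  have "n \<le> height_bound i" using level_index(1) height_bound(1) unfolding i_def by (meson order_trans)
  have C: "connectedin \<Gamma> (freudenthal_end_of W i)" "freudenthal_end_of W i \<subseteq> high n"
    using connected_components_of_complement(1,2)[OF freudenthal_end_of(1)[OF W]]
      outside_level_index_high unfolding i_def by blast+
  have "x \<in> W n" using end_vertex[OF W \<open>n \<le> height_bound i\<close>] unfolding x_def .
  moreover obtain s where "s \<in> S"
    using S_nonempty outer_components_subset[OF graph_ends_component[OF W]] calculation by blast
  ultimately have "Inl x \<in> star (W n)" by (rule vertex_in_star)
  moreover have "Inl x \<in> freudenthal_end_of W i"
    using end_vertex_in_subgraph[OF W order_refl] freudenthal_end_of(2)[OF W] unfolding x_def by blast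
  ultimately show ?thesis
    using connectedin_high_subset_star[OF C graph_ends_component[OF W]] unfolding i_def by blast
qed

lemma inj_on_freudenthal_end_of: "inj_on freudenthal_end_of graph_ends"
proof (rule inj_onI)
  fix W W' assume W: "W \<in> graph_ends" and W': "W' \<in> graph_ends"
    and eq: "freudenthal_end_of W = freudenthal_end_of W'"
  show "W = W'"
  proof
    fix n
    define C where "C = freudenthal_end_of W (level_index n)"
    obtain y where "y \<in> C"
      using connected_components_of_complement(3)[OF freudenthal_end_of(1)[OF W]] unfolding C_def by blast
    moreover have "C \<subseteq> high n"
      using connected_components_of_complement(2)[OF freudenthal_end_of(1)[OF W]] outside_level_index_high
      unfolding C_def by blast
    moreover have "C \<subseteq> star (W n)" "C \<subseteq> star (W' n)"
      using freudenthal_end_of_subset_star[OF W] freudenthal_end_of_subset_star[OF W'] eq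
      unfolding C_def by auto
    ultimately show "W n = W' n"
      using high_star_unique graph_ends_component[OF W] graph_ends_component[OF W'] by blast
  qed
qed

theorem freudenthal_ends_eqpoll_graph_ends: "freudenthal_ends \<Gamma> K \<approx> graph_ends"
proof (rule lepoll_antisym)
  show "freudenthal_ends \<Gamma> K \<lesssim> graph_ends"
    unfolding lepoll_def using inj_on_graph_end_of graph_end_of_graph_ends by blast
  show "graph_ends \<lesssim> freudenthal_ends \<Gamma> K"
    unfolding lepoll_def using inj_on_freudenthal_end_of freudenthal_end_of_freudenthal_ends by blast
qed

end

theorem proposition5p4:
  fixes G :: "('a, 'b) monoid_scheme" and S :: "'a set" and d :: "'a \<Rightarrow> 'a \<Rightarrow> real"
    and K :: "nat \<Rightarrow> ('a + ('a \<times> 'a \<times> real) set) set"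
  assumes "group G"
    and "finite S" and "S \<subseteq> carrier G" and "\<forall>s\<in>S. inv\<^bsub>G\<^esub> s \<in> S"
    and "generate G S = carrier G"
    and "proper_left_invariant_metric G d"
    and "exhaustion (cayley_top G S) K"
  shows "CF_remainder (carrier G) d \<approx> freudenthal_ends (cayley_top G S) K"
proof -
  interpret fg_metric_group_exhaustion G S d K
    using assms by (simp add: fg_metric_group_exhaustion_def fg_metric_group_def
        fg_metric_group_axioms_def fg_metric_group_exhaustion_axioms_def)
  show ?thesis
    using remainder_eqpoll_graph_ends freudenthal_ends_eqpoll_graph_ends
    by (blast intro: eqpoll_trans eqpoll_sym)
qed

end
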